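(* Let $(C_*,\partial,\ell)$ be an ascending chain complex over a field $\kappa$ such that, for every $k$, $\ell(C_k\setminus\{0\})$ is a well-ordered subset of $\mathbb{R}$. Then $(C_*,\partial,\ell)$ is isomorphic, in the category of ascending chain complexes (morphisms: chain maps $f$ with $\ell'\circ f\le\ell$), to a direct sum $\left(\bigoplus_{i\in I}\mathcal{E}_{k_i}(a_i,b_i)_\uparrow\right)\oplus\left(\bigoplus_{j\in J}\mathcal{E}_{l_j}(c_j,\infty)_\uparrow\right)$ for suitable index sets $I,J$, integers $k_i,l_j$, and reals $a_i\le b_i$, $c_j$. Moreover the summand $\bigoplus_{j\in J}\mathcal{E}_{l_j}(c_j,\infty)_\uparrow$ is isomorphic to $(H_*(C_* ),0,\rho)$, the homology regarded as an ascending complex with zero differential and filtration function the spectral invariant function $\rho$.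
   Context: An ascending chain complex over $\kappa$ is a triple $(C_*,\partial,\ell)$ where $(C_*=\bigoplus_{k\in\mathbb{Z}}C_k,\partial)$ is a chain complex of $\kappa$-vector spaces and $\ell\colon C_*\to\mathbb{R}\cup\{-\infty\}$ satisfies: $\ell(x)=-\infty$ iff $x=0$; $\ell(\sum_i c_ix_i)\le\max\{\ell(x_i): c_i\neq 0\}$, with equality if the $x_i$ lie in pairwise distinct degrees; and $\ell(\partial x)\le\ell(x)$. Direct sums: $\ell(\sum_\alpha x_\alpha)=\max_\alpha\ell_\alpha(x_\alpha)$. For $k\in\mathbb{Z}$ and $a\le b$ real, $\mathcal{E}_k(a,b)_\uparrow$ is the ascending complex which is $\kappa$ in degrees $k$ and $k+1$ and $0$ elsewhere, with $\partial\colon C_{k+1}\to C_k$ the identity of $\kappa$, and with $\ell\equiv a$ on $C_k\setminus0$, $\ell\equiv b$ on $C_{k+1}\setminus0$. For $c\in\mathbb{R}$, $\mathcal{E}_k(c,\infty)_\uparrow$ is $\kappa$ in degree $k$, $0$ elsewhere, zero differential, $\ell\equiv c$ on nonzero elements. The spectral invariant function is $\rho(h)=\inf\{\ell(c):c\in\ker\partial,[c]=h\}$. *)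

theory Defs
  imports "HOL-Library.Extended_Real"
begin

record ('k, 'v) acc =
  car  :: "'v set"
  add  :: "'v \<Rightarrow> 'v \<Rightarrow> 'v"
  zer  :: "'v"
  smul :: "'k \<Rightarrow> 'v \<Rightarrow> 'v"
  deg  :: "int \<Rightarrow> 'v set"
  bd   :: "'v \<Rightarrow> 'v"
  filt :: "'v \<Rightarrow> ereal"

primrec vsumn :: "('k, 'v, 'z) acc_scheme \<Rightarrow> (nat \<Rightarrow> 'v) \<Rightarrow> nat \<Rightarrow> 'v" where
  "vsumn C f 0 = zer C"
| "vsumn C f (Suc m) = add C (vsumn C f m) (f m)"

definition vspace :: "('k::field, 'v, 'z) acc_scheme \<Rightarrow> bool" where
  "vspace C \<longleftrightarrow>
     zer C \<in> car C \<and>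
     (\<forall>x\<in>car C. \<forall>y\<in>car C. add C x y \<in> car C) \<and>
     (\<forall>c. \<forall>x\<in>car C. smul C c x \<in> car C) \<and>
     (\<forall>x\<in>car C. \<forall>y\<in>car C. \<forall>z\<in>car C. add C (add C x y) z = add C x (add C y z)) \<and>
     (\<forall>x\<in>car C. \<forall>y\<in>car C. add C x y = add C y x) \<and>
     (\<forall>x\<in>car C. add C (zer C) x = x) \<and>
     (\<forall>x\<in>car C. \<exists>y\<in>car C. add C x y = zer C) \<and>
     (\<forall>c. \<forall>x\<in>car C. \<forall>y\<in>car C. smul C c (add C x y) = add C (smul C c x) (smul C c y)) \<and>
     (\<forall>c d. \<forall>x\<in>car C. smul C (c + d) x = add C (smul C c x) (smul C d x)) \<and>
     (\<forall>c d. \<forall>x\<in>car C. smul C (c * d) x = smul C c (smul C d x)) \<and>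
     (\<forall>x\<in>car C. smul C 1 x = x)"

text \<open>\<open>car C\<close> is the internal direct sum of the subspaces \<open>deg C k\<close>, \<open>k \<in> \<int>\<close>.\<close>
definition graded :: "('k::field, 'v, 'z) acc_scheme \<Rightarrow> bool" where
  "graded C \<longleftrightarrow>
     (\<forall>n. deg C n \<subseteq> car C \<and> zer C \<in> deg C n \<and>
          (\<forall>x\<in>deg C n. \<forall>y\<in>deg C n. add C x y \<in> deg C n) \<and>
          (\<forall>c. \<forall>x\<in>deg C n. smul C c x \<in> deg C n)) \<and>
     (\<forall>x\<in>car C. \<exists>m f d. (\<forall>i<m. f i \<in> deg C (d i)) \<and> x = vsumn C f m) \<and>
     (\<forall>m f d. inj_on d {..<m} \<and> (\<forall>i<m. f i \<in> deg C (d i)) \<and> vsumn C f m = zer C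
              \<longrightarrow> (\<forall>i<m. f i = zer C))"

definition chain_cx :: "('k::field, 'v, 'z) acc_scheme \<Rightarrow> bool" where
  "chain_cx C \<longleftrightarrow>
     vspace C \<and> graded C \<and>
     (\<forall>x\<in>car C. bd C x \<in> car C) \<and>
     (\<forall>x\<in>car C. \<forall>y\<in>car C. bd C (add C x y) = add C (bd C x) (bd C y)) \<and>
     (\<forall>c. \<forall>x\<in>car C. bd C (smul C c x) = smul C c (bd C x)) \<and>
     (\<forall>n. bd C ` deg C (n + 1) \<subseteq> deg C n) \<and>
     (\<forall>x\<in>car C. bd C (bd C x) = zer C)"

definition asc_complex :: "('k::field, 'v, 'z) acc_scheme \<Rightarrow> bool" where
  "asc_complex C \<longleftrightarrow>
     chain_cx C \<and>
     (\<forall>x\<in>car C. (filt C x = -\<infinity> \<longleftrightarrow> x = zer C) \<and> filt C x \<noteq> \<infinity>) \<and>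
     (\<forall>m (c :: nat \<Rightarrow> 'k) f. (\<forall>i<m. f i \<in> car C) \<longrightarrow>
        filt C (vsumn C (\<lambda>i. smul C (c i) (f i)) m)
          \<le> Sup {filt C (f i) | i. i < m \<and> c i \<noteq> 0}) \<and>
     (\<forall>m (c :: nat \<Rightarrow> 'k) f d. inj_on d {..<m} \<and> (\<forall>i<m. f i \<in> deg C (d i)) \<longrightarrow>
        filt C (vsumn C (\<lambda>i. smul C (c i) (f i)) m)
          = Sup {filt C (f i) | i. i < m \<and> c i \<noteq> 0}) \<and>
     (\<forall>x\<in>car C. filt C (bd C x) \<le> filt C x)"

definition acc_mor :: "('k::field, 'v, 'z) acc_scheme \<Rightarrow> ('k, 'w, 'y) acc_scheme \<Rightarrow> ('v \<Rightarrow> 'w) \<Rightarrow> bool" where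
  "acc_mor C D f \<longleftrightarrow>
     (\<forall>x\<in>car C. f x \<in> car D) \<and>
     (\<forall>x\<in>car C. \<forall>y\<in>car C. f (add C x y) = add D (f x) (f y)) \<and>
     (\<forall>c. \<forall>x\<in>car C. f (smul C c x) = smul D c (f x)) \<and>
     (\<forall>n. f ` deg C n \<subseteq> deg D n) \<and>
     (\<forall>x\<in>car C. f (bd C x) = bd D (f x)) \<and>
     (\<forall>x\<in>car C. filt D (f x) \<le> filt C x)"

definition acc_iso :: "('k::field, 'v, 'z) acc_scheme \<Rightarrow> ('k, 'w, 'y) acc_scheme \<Rightarrow> bool" where
  "acc_iso C D \<longleftrightarrow> (\<exists>f g. acc_mor C D f \<and> acc_mor D C g \<and>
       (\<forall>x\<in>car C. g (f x) = x) \<and> (\<forall>y\<in>car D. f (g y) = y))"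

text \<open>\<open>\<E>_k(a,b)\<close>: \<open>\<kappa>\<close> in degrees k (first coordinate) and k+1 (second coordinate).\<close>
definition Efin :: "int \<Rightarrow> real \<Rightarrow> real \<Rightarrow> ('k::field, 'k \<times> 'k) acc" where
  "Efin k a b = \<lparr> car = UNIV,
     add = (\<lambda>(x, y) (u, v). (x + u, y + v)),
     zer = (0, 0),
     smul = (\<lambda>c (x, y). (c * x, c * y)),
     deg = (\<lambda>n. if n = k then {(x, 0) | x. True}
                 else if n = k + 1 then {(0, y) | y. True} else {(0, 0)}),
     bd = (\<lambda>(x, y). (y, 0)),
     filt = (\<lambda>(x, y). if y \<noteq> 0 then ereal b else if x \<noteq> 0 then ereal a else -\<infinity>) \<rparr>"

definition Einf :: "int \<Rightarrow> real \<Rightarrow> ('k::field, 'k) acc" where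
  "Einf l c = \<lparr> car = UNIV, add = (+), zer = 0, smul = (*),
     deg = (\<lambda>n. if n = l then UNIV else {0}),
     bd = (\<lambda>_. 0),
     filt = (\<lambda>x. if x = 0 then -\<infinity> else ereal c) \<rparr>"

definition dsumF :: "'i set \<Rightarrow> ('i \<Rightarrow> ('k::field, 'w) acc) \<Rightarrow> ('k, 'i \<Rightarrow> 'w) acc" where
  "dsumF I E = \<lparr>
     car = {x. (\<forall>i\<in>I. x i \<in> car (E i)) \<and> (\<forall>i. i \<notin> I \<longrightarrow> x i = zer (E i))
              \<and> finite {i. x i \<noteq> zer (E i)}},
     add = (\<lambda>x y i. add (E i) (x i) (y i)),
     zer = (\<lambda>i. zer (E i)),
     smul = (\<lambda>c x i. smul (E i) c (x i)),
     deg = (\<lambda>n. {x. (\<forall>i\<in>I. x i \<in> deg (E i) n) \<and> (\<forall>i. i \<notin> I \<longrightarrow> x i = zer (E i))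
              \<and> finite {i. x i \<noteq> zer (E i)}}),
     bd = (\<lambda>x i. if i \<in> I then bd (E i) (x i) else zer (E i)),
     filt = (\<lambda>x. Sup {filt (E i) (x i) | i. i \<in> I}) \<rparr>"

definition dsum2 :: "('k::field, 'a) acc \<Rightarrow> ('k, 'b) acc \<Rightarrow> ('k, 'a \<times> 'b) acc" where
  "dsum2 A B = \<lparr>
     car = car A \<times> car B,
     add = (\<lambda>(x, y) (u, v). (add A x u, add B y v)),
     zer = (zer A, zer B),
     smul = (\<lambda>c (x, y). (smul A c x, smul B c y)),
     deg = (\<lambda>n. deg A n \<times> deg B n),
     bd = (\<lambda>(x, y). (bd A x, bd B y)),
     filt = (\<lambda>(x, y). max (filt A x) (filt B y)) \<rparr>"

text \<open>Homology \<open>H_*(C) = ker \<partial> / im \<partial>\<close>, elements represented as cosets (subsets of the carrier),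
  with zero differential and the spectral invariant function \<open>\<rho>\<close> as filtration function.\<close>
definition cycles :: "('k, 'v, 'z) acc_scheme \<Rightarrow> 'v set" where
  "cycles C = {x \<in> car C. bd C x = zer C}"

definition bounds :: "('k, 'v, 'z) acc_scheme \<Rightarrow> 'v set" where
  "bounds C = bd C ` car C"

definition hclass :: "('k, 'v, 'z) acc_scheme \<Rightarrow> 'v \<Rightarrow> 'v set" where
  "hclass C z = {add C z b | b. b \<in> bounds C}"

definition spec_inv :: "('k, 'v, 'z) acc_scheme \<Rightarrow> 'v set \<Rightarrow> ereal" where
  "spec_inv C h = Inf {filt C c | c. c \<in> cycles C \<and> hclass C c = h}"

definition homology :: "('k::field, 'v, 'z) acc_scheme \<Rightarrow> ('k, 'v set) acc" where
  "homology C = \<lparr>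
     car = hclass C ` cycles C,
     add = (\<lambda>X Y. {add C x y | x y. x \<in> X \<and> y \<in> Y}),
     zer = bounds C,
     smul = (\<lambda>c X. {add C (smul C c x) b | x b. x \<in> X \<and> b \<in> bounds C}),
     deg = (\<lambda>n. hclass C ` (cycles C \<inter> deg C n)),
     bd = (\<lambda>_. bounds C),
     filt = spec_inv C \<rparr>"

definition well_ordered_set :: "ereal set \<Rightarrow> bool" where
  "well_ordered_set S \<longleftrightarrow> (\<forall>T \<subseteq> S. T \<noteq> {} \<longrightarrow> (\<exists>m\<in>T. \<forall>t\<in>T. m \<le> t))"

end

theory Submission
  imports Defs "HOL-Algebra.FiniteProduct"
begin

text \<open>
  Call a basis orthogonal for a filtration function \<open>\<ell>\<close> if the level of every linear combination
  is the largest level of a basis vector occurring in it.  If two filtration functions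
  \<open>\<phi>, \<psi>\<close> on a space have well-ordered values, a basis orthogonal for both exists: take, by
  Zorn's lemma, bases of the graded pieces (vectors of bilevel \<open>\<le> (s, t)\<close> modulo those strictly
  lower in \<open>\<phi>\<close> or in \<open>\<psi>\<close>), and show spanning by a minimal counterexample.

  In degree \<open>n\<close> apply this to the boundaries with \<open>\<ell>\<close> and the preimage level
  \<open>w \<mapsto> min \<ell>(\<partial>\<^sup>-\<^sup>1 w)\<close>, and to the cycles with \<open>\<ell>\<close> and the indicator of the boundaries;
  exchanging bases yields an \<open>\<ell>\<close>-orthogonal basis \<open>P \<union> Z\<close> of the cycles with \<open>P\<close> a
  boundary basis orthogonal for the preimage level.  Adding least-level preimages of \<open>P\<close> keeps
  orthogonality, because the level of a chain is at least the preimage level of its boundary.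
  Together over all degrees this is a singular value decomposition \<open>\<partial>I \<union> I \<union> J\<close> of the
  complex; coordinates with respect to it are an isomorphism onto the direct sum of the blocks
  \<open>\<E>\<^sub>k(\<ell>(\<partial>i), \<ell>(i))\<close> and \<open>\<E>\<^sub>l(\<ell>(j), \<infinity>)\<close>.  Finally, every homology class has the
  \<open>J\<close>-part of any of its cycles as a representative of least level, so \<open>\<rho>\<close> is the level of the
  \<open>J\<close>-coordinates and the \<open>J\<close>-blocks are isomorphic to \<open>(H\<^sub>*(C), 0, \<rho>)\<close>.
\<close>

locale acc_vspace =
  fixes C :: "('k::field, 'v) acc"
  assumes vspace: "vspace C"
begin

lemma zer_closed [simp]: "zer C \<in> car C"
  using vspace unfolding vspace_def by blast

lemma add_closed [simp]: "x \<in> car C \<Longrightarrow> y \<in> car C \<Longrightarrow> add C x y \<in> car C"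
  using vspace unfolding vspace_def by auto

lemma smul_closed [simp]: "x \<in> car C \<Longrightarrow> smul C c x \<in> car C"
  using vspace unfolding vspace_def by blast

lemma add_assoc:
  "x \<in> car C \<Longrightarrow> y \<in> car C \<Longrightarrow> z \<in> car C \<Longrightarrow> add C (add C x y) z = add C x (add C y z)"
  using vspace unfolding vspace_def by blast

lemma add_comm: "x \<in> car C \<Longrightarrow> y \<in> car C \<Longrightarrow> add C x y = add C y x"
  using vspace unfolding vspace_def by blast

lemma zer_add [simp]: "x \<in> car C \<Longrightarrow> add C (zer C) x = x"
  using vspace unfolding vspace_def by blast

lemma add_zer [simp]: "x \<in> car C \<Longrightarrow> add C x (zer C) = x"
  using add_comm zer_add by simp

lemma ex_add_inverse: "x \<in> car C \<Longrightarrow> \<exists>y\<in>car C. add C x y = zer C"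
  using vspace unfolding vspace_def by blast

lemma smul_add: "x \<in> car C \<Longrightarrow> y \<in> car C \<Longrightarrow> smul C c (add C x y) = add C (smul C c x) (smul C c y)"
  using vspace unfolding vspace_def by blast

lemma add_smul: "x \<in> car C \<Longrightarrow> smul C (c + d) x = add C (smul C c x) (smul C d x)"
  using vspace unfolding vspace_def by blast

lemma smul_smul: "x \<in> car C \<Longrightarrow> smul C (c * d) x = smul C c (smul C d x)"
  using vspace unfolding vspace_def by blast

lemma smul_one [simp]: "x \<in> car C \<Longrightarrow> smul C 1 x = x"
  using vspace unfolding vspace_def by blast

lemma add_left_cancel:
  assumes "x \<in> car C" "y \<in> car C" "z \<in> car C" "add C x y = add C x z"
  shows "y = z"
proof -
  obtain x' where x': "x' \<in> car C" "add C x x' = zer C"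
    using ex_add_inverse assms by blast
  have "add C x' (add C x y) = add C x' (add C x z)"
    using assms by simp
  then show ?thesis
    using x' assms by (metis add_assoc add_comm zer_add)
qed

lemma smul_zero [simp]: "x \<in> car C \<Longrightarrow> smul C 0 x = zer C"
  using add_smul[of x 0 0] add_left_cancel[of "smul C 0 x" "smul C 0 x" "zer C"] by simp

lemma smul_zer [simp]: "smul C c (zer C) = zer C"
  using smul_add[of "zer C" "zer C" c] add_left_cancel[of "smul C c (zer C)" _ "zer C"] by simp

definition neg :: "'v \<Rightarrow> 'v" where
  "neg x = smul C (-1) x"

lemma neg_closed [simp]: "x \<in> car C \<Longrightarrow> neg x \<in> car C"
  unfolding neg_def by simp

lemma add_neg [simp]: "x \<in> car C \<Longrightarrow> add C x (neg x) = zer C"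
  unfolding neg_def using add_smul[of x 1 "-1"] by simp

lemma neg_add [simp]: "x \<in> car C \<Longrightarrow> add C (neg x) x = zer C"
  using add_comm add_neg by simp

lemma smul_inverse_cancel [simp]:
  "x \<in> car C \<Longrightarrow> c \<noteq> 0 \<Longrightarrow> smul C (inverse c) (smul C c x) = x"
  by (simp add: smul_smul[symmetric])

lemma add_neg_cancel_right: "x \<in> car C \<Longrightarrow> y \<in> car C \<Longrightarrow> add C (add C x y) (neg y) = x"
  by (simp add: add_assoc)

lemma eq_add_neg_if_add_eq:
  "x \<in> car C \<Longrightarrow> y \<in> car C \<Longrightarrow> add C x y = z \<Longrightarrow> x = add C z (neg y)"
  using add_neg_cancel_right by auto

lemma add_add_swap:
  "a \<in> car C \<Longrightarrow> b \<in> car C \<Longrightarrow> c \<in> car C \<Longrightarrow> d \<in> car C \<Longrightarrow>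
    add C (add C a b) (add C c d) = add C (add C a c) (add C b d)"
  by (metis add_assoc add_closed add_comm)

subsection \<open>Finite sums and linear combinations\<close>

definition additive_monoid :: "'v monoid" where
  "additive_monoid = \<lparr>carrier = car C, mult = add C, one = zer C\<rparr>"

lemma additive_monoid_simps [simp]:
  "carrier additive_monoid = car C" "mult additive_monoid = add C" "one additive_monoid = zer C"
  unfolding additive_monoid_def by simp_all

lemma comm_monoid_additive: "comm_monoid additive_monoid"
  by (rule comm_monoidI) (auto simp: add_assoc intro: add_comm)

interpretation M: comm_monoid additive_monoid
  by (rule comm_monoid_additive)

definition vsum :: "('a \<Rightarrow> 'v) \<Rightarrow> 'a set \<Rightarrow> 'v" where
  "vsum f S = finprod additive_monoid f S"

lemma vsum_empty [simp]: "vsum f {} = zer C"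
  unfolding vsum_def by simp

lemma vsum_infinite [simp]: "infinite A \<Longrightarrow> vsum f A = zer C"
  unfolding vsum_def by simp

lemma vsum_closed [simp]: "(\<And>x. x \<in> S \<Longrightarrow> f x \<in> car C) \<Longrightarrow> vsum f S \<in> car C"
  unfolding vsum_def using M.finprod_closed[of f S] by (auto simp: Pi_def)

lemma vsum_insert:
  "finite S \<Longrightarrow> a \<notin> S \<Longrightarrow> (\<And>x. x \<in> insert a S \<Longrightarrow> f x \<in> car C) \<Longrightarrow>
    vsum f (insert a S) = add C (f a) (vsum f S)"
  unfolding vsum_def by (subst M.finprod_insert) auto

lemma vsum_cong:
  "S = T \<Longrightarrow> (\<And>x. x \<in> T \<Longrightarrow> f x = g x) \<Longrightarrow> (\<And>x. x \<in> T \<Longrightarrow> g x \<in> car C) \<Longrightarrow>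
    vsum f S = vsum g T"
  unfolding vsum_def by (rule M.finprod_cong') auto

lemma vsum_add:
  "(\<And>x. x \<in> S \<Longrightarrow> f x \<in> car C) \<Longrightarrow> (\<And>x. x \<in> S \<Longrightarrow> g x \<in> car C) \<Longrightarrow>
    vsum (\<lambda>x. add C (f x) (g x)) S = add C (vsum f S) (vsum g S)"
  unfolding vsum_def using M.finprod_multf[of f S g] by (auto simp: Pi_def)

lemma vsum_zer: "(\<And>x. x \<in> S \<Longrightarrow> f x = zer C) \<Longrightarrow> vsum f S = zer C"
  unfolding vsum_def using M.finprod_one_eqI[of S f] by simp

lemma vsum_Un_disjoint:
  "finite A \<Longrightarrow> finite B \<Longrightarrow> A \<inter> B = {} \<Longrightarrow> (\<And>x. x \<in> A \<union> B \<Longrightarrow> f x \<in> car C) \<Longrightarrow>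
    vsum f (A \<union> B) = add C (vsum f A) (vsum f B)"
  unfolding vsum_def by (subst M.finprod_Un_disjoint) (auto simp: Pi_def)

lemma vsum_mono_neutral:
  assumes "finite T" "S \<subseteq> T" "\<And>x. x \<in> T - S \<Longrightarrow> f x = zer C" "\<And>x. x \<in> T \<Longrightarrow> f x \<in> car C"
  shows "vsum f S = vsum f T"
  unfolding vsum_def using assms by (intro M.finprod_mono_neutral_cong_left) (auto simp: Pi_def)

lemma vsum_smul:
  assumes "finite S" "\<And>x. x \<in> S \<Longrightarrow> f x \<in> car C"
  shows "smul C c (vsum f S) = vsum (\<lambda>x. smul C c (f x)) S"
  using assms
proof (induction S rule: finite_induct)
  case (insert a S)
  have "vsum f (insert a S) = add C (f a) (vsum f S)"
    by (rule vsum_insert) (use insert in auto)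
  moreover have "vsum (\<lambda>x. smul C c (f x)) (insert a S) =
      add C (smul C c (f a)) (vsum (\<lambda>x. smul C c (f x)) S)"
    by (rule vsum_insert) (use insert in auto)
  ultimately show ?case
    using insert by (simp add: smul_add)
qed simp

lemma vsum_reindex:
  "inj_on h A \<Longrightarrow> (\<And>x. x \<in> h ` A \<Longrightarrow> f x \<in> car C) \<Longrightarrow> vsum f (h ` A) = vsum (f \<circ> h) A"
  unfolding vsum_def using M.finprod_reindex[of f h A] by (auto simp: Pi_def o_def)

lemma vsum_UN_disjoint:
  assumes "finite I" "\<And>i. i \<in> I \<Longrightarrow> finite (A i)"
    "pairwise (\<lambda>i j. disjnt (A i) (A j)) I" "\<And>x. x \<in> (\<Union>i\<in>I. A i) \<Longrightarrow> f x \<in> car C"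
  shows "vsum f (\<Union>i\<in>I. A i) = vsum (\<lambda>i. vsum f (A i)) I"
  unfolding vsum_def using assms
  by (subst M.finprod_UN_disjoint) (fastforce simp: Pi_def pairwise_def disjnt_def)+

lemma vsumn_eq_vsum: "(\<And>i. i < m \<Longrightarrow> f i \<in> car C) \<Longrightarrow> vsumn C f m = vsum f {..<m}"
proof (induction m)
  case (Suc m)
  have "vsum f {..<Suc m} = add C (f m) (vsum f {..<m})"
    unfolding lessThan_Suc by (rule vsum_insert) (use Suc in auto)
  moreover have "vsum f {..<m} \<in> car C"
    by (rule vsum_closed) (use Suc in auto)
  ultimately show ?case
    using Suc add_comm[of "vsum f {..<m}" "f m"] by simp
qed simp

lemma vsum_as_vsumn:
  assumes "finite N" "\<And>m. m \<in> N \<Longrightarrow> g m \<in> car C"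
  obtains h where "bij_betw h {..<card N} N" "vsum g N = vsumn C (g \<circ> h) (card N)"
proof -
  obtain h where h: "bij_betw h {..<card N} N"
    using ex_bij_betw_nat_finite[OF assms(1)] by (auto simp: atLeast0LessThan)
  then have "vsum g N = vsum (g \<circ> h) {..<card N}"
    using vsum_reindex[of h "{..<card N}" g] assms by (auto simp: bij_betw_def)
  also have "\<dots> = vsumn C (g \<circ> h) (card N)"
    using h assms by (intro vsumn_eq_vsum[symmetric]) (auto simp: bij_betw_def)
  finally show ?thesis
    using h that by blast
qed

definition lincomb :: "'v set \<Rightarrow> ('v \<Rightarrow> 'k) \<Rightarrow> 'v" where
  "lincomb S c = vsum (\<lambda>v. smul C (c v) v) S"

lemma lincomb_closed [simp]: "S \<subseteq> car C \<Longrightarrow> lincomb S c \<in> car C"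
  unfolding lincomb_def by (rule vsum_closed) auto

lemma lincomb_empty [simp]: "lincomb {} c = zer C"
  unfolding lincomb_def by simp

lemma lincomb_singleton [simp]: "a \<in> car C \<Longrightarrow> lincomb {a} c = smul C (c a) a"
  unfolding lincomb_def using vsum_insert[of "{}" a] by simp

lemma lincomb_insert:
  "finite S \<Longrightarrow> a \<notin> S \<Longrightarrow> insert a S \<subseteq> car C \<Longrightarrow>
    lincomb (insert a S) c = add C (smul C (c a) a) (lincomb S c)"
  unfolding lincomb_def by (rule vsum_insert) auto

lemma lincomb_cong: "S \<subseteq> car C \<Longrightarrow> (\<And>v. v \<in> S \<Longrightarrow> c v = d v) \<Longrightarrow> lincomb S c = lincomb S d"
  unfolding lincomb_def by (rule vsum_cong) auto

lemma lincomb_add: "S \<subseteq> car C \<Longrightarrow> add C (lincomb S c) (lincomb S d) = lincomb S (\<lambda>v. c v + d v)"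
  unfolding lincomb_def by (subst vsum_add[symmetric]) (auto intro!: vsum_cong simp: add_smul)

lemma lincomb_smul:
  "finite S \<Longrightarrow> S \<subseteq> car C \<Longrightarrow> smul C a (lincomb S c) = lincomb S (\<lambda>v. a * c v)"
  unfolding lincomb_def by (subst vsum_smul) (auto intro!: vsum_cong simp: smul_smul)

lemma lincomb_neg: "finite S \<Longrightarrow> S \<subseteq> car C \<Longrightarrow> neg (lincomb S c) = lincomb S (\<lambda>v. - c v)"
  unfolding neg_def by (subst lincomb_smul) auto

lemma lincomb_mono_neutral:
  "finite T \<Longrightarrow> S \<subseteq> T \<Longrightarrow> T \<subseteq> car C \<Longrightarrow> (\<And>v. v \<in> T - S \<Longrightarrow> c v = 0) \<Longrightarrow>
    lincomb S c = lincomb T c"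
  unfolding lincomb_def by (rule vsum_mono_neutral) auto

lemma lincomb_support:
  "finite S \<Longrightarrow> S \<subseteq> car C \<Longrightarrow> lincomb S c = lincomb {v\<in>S. c v \<noteq> 0} c"
  by (rule lincomb_mono_neutral[symmetric]) auto

lemma lincomb_Un_disjoint:
  "finite A \<Longrightarrow> finite B \<Longrightarrow> A \<inter> B = {} \<Longrightarrow> A \<union> B \<subseteq> car C \<Longrightarrow>
    lincomb (A \<union> B) c = add C (lincomb A c) (lincomb B c)"
  unfolding lincomb_def by (rule vsum_Un_disjoint) auto

lemma lincomb_split:
  assumes "finite S" "S \<subseteq> car C"
  shows "lincomb S c = add C (lincomb (S \<inter> A) c) (lincomb (S - A) c)"
proof -
  have "lincomb ((S \<inter> A) \<union> (S - A)) c = add C (lincomb (S \<inter> A) c) (lincomb (S - A) c)"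
    using assms by (intro lincomb_Un_disjoint) auto
  then show ?thesis
    by (simp add: Int_Diff_Un)
qed

lemma lincomb_extend:
  assumes "finite T" "S \<subseteq> T" "T \<subseteq> car C"
  shows "lincomb S c = lincomb T (\<lambda>v. if v \<in> S then c v else 0)"
proof -
  have "lincomb S c = lincomb S (\<lambda>v. if v \<in> S then c v else 0)"
    using assms by (intro lincomb_cong) auto
  also have "\<dots> = lincomb T (\<lambda>v. if v \<in> S then c v else 0)"
    using assms by (intro lincomb_mono_neutral) auto
  finally show ?thesis .
qed

lemma lincomb_add_Un:
  assumes "finite S" "finite T" "S \<union> T \<subseteq> car C"
  shows "add C (lincomb S c) (lincomb T d) =
    lincomb (S \<union> T) (\<lambda>v. (if v \<in> S then c v else 0) + (if v \<in> T then d v else 0))"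
  using assms lincomb_extend[of "S \<union> T" S c] lincomb_extend[of "S \<union> T" T d]
  by (simp add: lincomb_add)

lemma vsum_smul_image:
  assumes "\<And>v. v \<in> S \<Longrightarrow> g (h v) = v" "h ` S \<subseteq> car C"
  shows "vsum (\<lambda>v. smul C (c v) (h v)) S = lincomb (h ` S) (\<lambda>w. c (g w))"
proof -
  have "inj_on h S"
    using assms(1) by (metis inj_onI)
  then show ?thesis
    unfolding lincomb_def using assms by (subst vsum_reindex) (auto intro!: vsum_cong)
qed

lemma lincomb_partition:
  assumes "finite S" "S \<subseteq> car C"
  shows "lincomb S c = vsum (\<lambda>m. lincomb {b\<in>S. d b = m} c) (d ` S)"
proof -
  have "lincomb S c = vsum (\<lambda>v. smul C (c v) v) (\<Union>m\<in>d ` S. {b\<in>S. d b = m})"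
    unfolding lincomb_def by (rule arg_cong[where f = "vsum _"]) auto
  also have "\<dots> = vsum (\<lambda>m. lincomb {b\<in>S. d b = m} c) (d ` S)"
    unfolding lincomb_def using assms
    by (intro vsum_UN_disjoint) (auto simp: pairwise_def disjnt_def)
  finally show ?thesis .
qed

subsection \<open>Subspaces and spans\<close>

definition is_subspace :: "'v set \<Rightarrow> bool" where
  "is_subspace U \<longleftrightarrow> U \<subseteq> car C \<and> zer C \<in> U \<and> (\<forall>x\<in>U. \<forall>y\<in>U. add C x y \<in> U) \<and>
     (\<forall>c. \<forall>x\<in>U. smul C c x \<in> U)"

lemma is_subspaceD:
  assumes "is_subspace U"
  shows "U \<subseteq> car C" "zer C \<in> U" "x \<in> U \<Longrightarrow> y \<in> U \<Longrightarrow> add C x y \<in> U"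
    "x \<in> U \<Longrightarrow> smul C c x \<in> U" "x \<in> U \<Longrightarrow> neg x \<in> U" "x \<in> U \<Longrightarrow> x \<in> car C"
  using assms unfolding is_subspace_def neg_def by auto

lemma is_subspaceI:
  assumes "U \<subseteq> car C" "zer C \<in> U" "\<And>x y. x \<in> U \<Longrightarrow> y \<in> U \<Longrightarrow> add C x y \<in> U"
    "\<And>c x. x \<in> U \<Longrightarrow> smul C c x \<in> U"
  shows "is_subspace U"
  using assms unfolding is_subspace_def by blast

lemma is_subspace_car: "is_subspace (car C)"
  by (rule is_subspaceI) auto

lemma subspace_vsum:
  assumes U: "is_subspace U" and f: "\<And>x. x \<in> S \<Longrightarrow> f x \<in> U"
  shows "vsum f S \<in> U"
proof (cases "finite S")
  case True
  from True f show ?thesis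
  proof (induction S rule: finite_induct)
    case (insert a S)
    then show ?case
      using is_subspaceD[OF U] by (subst vsum_insert) auto
  qed (simp add: is_subspaceD[OF U])
qed (simp add: is_subspaceD[OF U])

lemma subspace_lincomb: "is_subspace U \<Longrightarrow> S \<subseteq> U \<Longrightarrow> lincomb S c \<in> U"
  unfolding lincomb_def by (rule subspace_vsum) (auto dest: is_subspaceD)

definition ssum :: "'v set \<Rightarrow> 'v set \<Rightarrow> 'v set" where
  "ssum A B = {add C a b | a b. a \<in> A \<and> b \<in> B}"

lemma mem_ssumI: "a \<in> A \<Longrightarrow> b \<in> B \<Longrightarrow> add C a b \<in> ssum A B"
  unfolding ssum_def by blast

lemma mem_ssumE:
  assumes "x \<in> ssum A B"
  obtains a b where "a \<in> A" "b \<in> B" "x = add C a b"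
  using assms unfolding ssum_def by blast

lemma ssum_subspace:
  assumes A: "is_subspace A" and B: "is_subspace B"
  shows "is_subspace (ssum A B)"
proof (rule is_subspaceI)
  note A' = is_subspaceD[OF A] and B' = is_subspaceD[OF B]
  show "ssum A B \<subseteq> car C"
    using A' B' by (auto elim!: mem_ssumE)
  show "zer C \<in> ssum A B"
    using mem_ssumI[of "zer C" A "zer C" B] A' B' by simp
  show "add C x y \<in> ssum A B" if xy: "x \<in> ssum A B" "y \<in> ssum A B" for x y
  proof -
    obtain a b where "a \<in> A" "b \<in> B" "x = add C a b"
      using xy(1) by (rule mem_ssumE)
    moreover obtain a' b' where "a' \<in> A" "b' \<in> B" "y = add C a' b'"
      using xy(2) by (rule mem_ssumE)
    moreover have "add C (add C a b) (add C a' b') = add C (add C a a') (add C b b')"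
      using calculation A' B' by (intro add_add_swap) auto
    ultimately show ?thesis
      using A' B' by (metis mem_ssumI)
  qed
  show "smul C c x \<in> ssum A B" if x: "x \<in> ssum A B" for c x
  proof -
    obtain a b where "a \<in> A" "b \<in> B" "x = add C a b"
      using x by (rule mem_ssumE)
    then show ?thesis
      using A' B' smul_add[of a b c] by (metis mem_ssumI)
  qed
qed

lemma ssum_comm: "is_subspace A \<Longrightarrow> is_subspace B \<Longrightarrow> ssum A B = ssum B A"
  unfolding ssum_def by (metis (no_types, opaque_lifting) add_comm is_subspaceD(6))

definition lin_span :: "'v set \<Rightarrow> 'v set" where
  "lin_span B = {lincomb S c | S c. finite S \<and> S \<subseteq> B}"

lemma lin_spanI: "finite S \<Longrightarrow> S \<subseteq> B \<Longrightarrow> lincomb S c \<in> lin_span B"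
  unfolding lin_span_def by blast

lemma lin_spanE:
  assumes "x \<in> lin_span B"
  obtains S c where "finite S" "S \<subseteq> B" "x = lincomb S c"
  using assms unfolding lin_span_def by blast

lemma lin_span_mono: "A \<subseteq> B \<Longrightarrow> lin_span A \<subseteq> lin_span B"
  unfolding lin_span_def by blast

lemma lin_span_subspace:
  assumes B: "B \<subseteq> car C"
  shows "is_subspace (lin_span B)"
proof (rule is_subspaceI)
  show "lin_span B \<subseteq> car C"
    using B by (auto elim!: lin_spanE)
  show "zer C \<in> lin_span B"
    using lin_spanI[of "{}" B] by simp
  show "add C x y \<in> lin_span B" if xy: "x \<in> lin_span B" "y \<in> lin_span B" for x y
  proof -
    obtain S c where "finite S" "S \<subseteq> B" "x = lincomb S c"
      using xy(1) by (rule lin_spanE)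
    moreover obtain T d where "finite T" "T \<subseteq> B" "y = lincomb T d"
      using xy(2) by (rule lin_spanE)
    ultimately have "add C x y =
        lincomb (S \<union> T) (\<lambda>v. (if v \<in> S then c v else 0) + (if v \<in> T then d v else 0))"
      using B lincomb_add_Un[of S T c d] by auto
    then show ?thesis
      using \<open>finite S\<close> \<open>finite T\<close> \<open>S \<subseteq> B\<close> \<open>T \<subseteq> B\<close> by (simp add: lin_spanI)
  qed
  show "smul C a x \<in> lin_span B" if x: "x \<in> lin_span B" for a x
  proof -
    obtain S c where "finite S" "S \<subseteq> B" "x = lincomb S c"
      using x by (rule lin_spanE)
    then show ?thesis
      using B lincomb_smul[of S a c] lin_spanI[of S B] by auto
  qed
qed

lemma mem_lin_span: "b \<in> B \<Longrightarrow> b \<in> car C \<Longrightarrow> b \<in> lin_span B"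
  using lin_spanI[of "{b}" B "\<lambda>_. 1"] by simp

definition indep_mod :: "'v set \<Rightarrow> 'v set \<Rightarrow> bool" where
  "indep_mod A S \<longleftrightarrow> (\<forall>T c. finite T \<longrightarrow> T \<subseteq> S \<longrightarrow> lincomb T c \<in> A \<longrightarrow> (\<forall>v\<in>T. c v = 0))"

lemma indep_mod_disjoint:
  assumes "indep_mod A S" "b \<in> S" "b \<in> car C"
  shows "b \<notin> A"
  using assms lincomb_singleton[of b "\<lambda>_. 1"] unfolding indep_mod_def
  by (metis empty_subsetI finite.emptyI finite_insert insert_subset one_neq_zero singletonI smul_one)

lemma indep_mod_insert:
  assumes A: "is_subspace A" and M: "indep_mod A M" "M \<subseteq> car C" and w: "w \<in> car C"
    and not_spanned: "w \<notin> ssum (lin_span M) A"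
  shows "indep_mod A (insert w M)"
  unfolding indep_mod_def
proof (intro allI impI)
  fix T c assume T: "finite T" "T \<subseteq> insert w M" "lincomb T c \<in> A"
  define T' where "T' = T - {w}"
  have T': "finite T'" "T' \<subseteq> M" "T' \<subseteq> car C"
    using T M unfolding T'_def by auto
  show "\<forall>v\<in>T. c v = 0"
  proof (cases "w \<in> T \<and> c w \<noteq> 0")
    case True
    then have "lincomb T c = lincomb (insert w T') c"
      by (simp add: T'_def insert_absorb)
    also have "\<dots> = add C (smul C (c w) w) (lincomb T' c)"
      using T' w by (intro lincomb_insert) (auto simp: T'_def)
    finally have "smul C (inverse (c w)) (lincomb T c) =
        add C w (lincomb T' (\<lambda>v. inverse (c w) * c v))"
      using True T' w by (simp add: smul_add lincomb_smul)
    then have "w = add C (smul C (inverse (c w)) (lincomb T c))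
        (neg (lincomb T' (\<lambda>v. inverse (c w) * c v)))"
      using T' w by (intro eq_add_neg_if_add_eq) auto
    also have "neg (lincomb T' (\<lambda>v. inverse (c w) * c v)) = lincomb T' (\<lambda>v. - (inverse (c w) * c v))"
      using T' by (simp add: lincomb_neg)
    finally have "w \<in> ssum A (lin_span M)"
      using T T' is_subspaceD(4)[OF A] by (metis mem_ssumI lin_spanI)
    then have "w \<in> ssum (lin_span M) A"
      using ssum_comm[OF A lin_span_subspace[OF M(2)]] by simp
    then show ?thesis
      using not_spanned by blast
  next
    case False
    then have "lincomb T c = lincomb T' c"
      using T M(2) w by (intro lincomb_mono_neutral[symmetric]) (auto simp: T'_def)
    then show ?thesis
      using M(1) T T' False unfolding indep_mod_def T'_def by (metis DiffI singletonD)
  qed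
qed

lemma indep_mod_Union_chain:
  assumes "C' \<in> chains {S. S \<subseteq> W \<and> indep_mod A S}"
  shows "indep_mod A (\<Union>C')"
  unfolding indep_mod_def
proof (intro allI impI)
  fix T c assume T: "finite T" "T \<subseteq> \<Union>C'" "lincomb T c \<in> A"
  show "\<forall>v\<in>T. c v = 0"
  proof (cases "C' = {}")
    case False
    then obtain X where "X \<in> C'" "T \<subseteq> X"
      using finite_subset_Union_chain[of T C' UNIV] T assms
      by (metis chains_def chain_subset_alt_def mem_Collect_eq)
    then show ?thesis
      using T assms unfolding chains_def indep_mod_def by blast
  qed (use T in auto)
qed

lemma ex_basis_mod:
  assumes A: "is_subspace A" and W: "is_subspace W"
  shows "\<exists>S\<subseteq>W. indep_mod A S \<and> W \<subseteq> ssum (lin_span S) A"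
proof -
  define F where "F = {S. S \<subseteq> W \<and> indep_mod A S}"
  have "\<forall>C'\<in>chains F. \<Union>C' \<in> F"
    using indep_mod_Union_chain unfolding F_def chains_def by blast
  then obtain M where M: "M \<in> F" "\<forall>X\<in>F. M \<subseteq> X \<longrightarrow> X = M"
    using Zorn_Lemma[of F] by blast
  have MW: "M \<subseteq> W" and MC: "M \<subseteq> car C"
    using M is_subspaceD(1)[OF W] unfolding F_def by auto
  have "w \<in> ssum (lin_span M) A" if w: "w \<in> W" for w
  proof (rule ccontr)
    assume w_out: "w \<notin> ssum (lin_span M) A"
    have "w \<in> car C"
      using w is_subspaceD(1)[OF W] by blast
    then have "insert w M \<in> F"
      using indep_mod_insert[OF A _ MC _ w_out] M w MW unfolding F_def by auto
    then have "w \<in> M"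
      using M by blast
    then have "add C w (zer C) \<in> ssum (lin_span M) A"
      using MC is_subspaceD(2)[OF A] by (intro mem_ssumI mem_lin_span) auto
    then show False
      using w_out \<open>w \<in> car C\<close> by simp
  qed
  then show ?thesis
    using M MW unfolding F_def by blast
qed

subsection \<open>Filtration functions\<close>

definition filtration :: "'v set \<Rightarrow> ('v \<Rightarrow> ereal) \<Rightarrow> bool" where
  "filtration U \<phi> \<longleftrightarrow> (\<forall>x\<in>U. \<phi> x = -\<infinity> \<longleftrightarrow> x = zer C) \<and>
     (\<forall>x\<in>U. \<forall>y\<in>U. \<phi> (add C x y) \<le> max (\<phi> x) (\<phi> y)) \<and> (\<forall>c. \<forall>x\<in>U. \<phi> (smul C c x) \<le> \<phi> x)"

lemma filtration_mono: "filtration W \<phi> \<Longrightarrow> U \<subseteq> W \<Longrightarrow> filtration U \<phi>"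
  unfolding filtration_def by blast

context
  fixes \<phi> U
  assumes U: "is_subspace U" and filt: "filtration U \<phi>"
begin

lemma filtration_zer [simp]: "\<phi> (zer C) = -\<infinity>"
  using filt is_subspaceD[OF U] unfolding filtration_def by auto

lemma filtration_eq_minf_iff: "x \<in> U \<Longrightarrow> \<phi> x = -\<infinity> \<longleftrightarrow> x = zer C"
  using filt unfolding filtration_def by auto

lemma filtration_add: "x \<in> U \<Longrightarrow> y \<in> U \<Longrightarrow> \<phi> (add C x y) \<le> max (\<phi> x) (\<phi> y)"
  using filt unfolding filtration_def by auto

lemma filtration_smul_le: "x \<in> U \<Longrightarrow> \<phi> (smul C c x) \<le> \<phi> x"
  using filt unfolding filtration_def by auto

lemma filtration_smul: "x \<in> U \<Longrightarrow> c \<noteq> 0 \<Longrightarrow> \<phi> (smul C c x) = \<phi> x"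
  using filtration_smul_le[of x c] filtration_smul_le[of "smul C c x" "inverse c"] is_subspaceD[OF U]
  by (metis antisym smul_inverse_cancel)

lemma filtration_neg: "x \<in> U \<Longrightarrow> \<phi> (neg x) = \<phi> x"
  unfolding neg_def by (rule filtration_smul) auto

lemma filtration_add_less:
  assumes "x \<in> U" "y \<in> U" "\<phi> x < \<phi> y"
  shows "\<phi> (add C x y) = \<phi> y"
proof -
  have "y = add C (add C x y) (neg x)"
    using assms is_subspaceD[OF U] by (metis add_assoc add_comm add_neg add_zer neg_closed)
  then have "\<phi> y \<le> max (\<phi> (add C x y)) (\<phi> x)"
    using filtration_add[of "add C x y" "neg x"] filtration_neg assms is_subspaceD[OF U] by metis
  moreover have "\<phi> (add C x y) \<le> \<phi> y"
    using filtration_add[OF assms(1,2)] assms by simp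
  ultimately show ?thesis
    using assms by (auto simp: max_def split: if_splits)
qed

lemma filtration_lincomb_le:
  "finite S \<Longrightarrow> S \<subseteq> U \<Longrightarrow> \<phi> (lincomb S c) \<le> Sup (\<phi> ` {v\<in>S. c v \<noteq> 0})"
proof (induction S rule: finite_induct)
  case (insert a S)
  have aU: "a \<in> U" "smul C (c a) a \<in> U" "lincomb S c \<in> U"
    using insert is_subspaceD[OF U] subspace_lincomb[OF U] by auto
  have "\<phi> (lincomb (insert a S) c) \<le> max (\<phi> (smul C (c a) a)) (\<phi> (lincomb S c))"
    using insert aU is_subspaceD[OF U] by (simp add: lincomb_insert subset_iff filtration_add)
  also have "\<dots> \<le> Sup (\<phi> ` {v\<in>insert a S. c v \<noteq> 0})"
  proof (rule max.boundedI)
    show "\<phi> (smul C (c a) a) \<le> Sup (\<phi> ` {v\<in>insert a S. c v \<noteq> 0})"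
      using aU is_subspaceD(6)[OF U aU(1)] by (cases "c a = 0") (auto simp: filtration_smul intro!: Sup_upper)
    have "Sup (\<phi> ` {v\<in>S. c v \<noteq> 0}) \<le> Sup (\<phi> ` {v\<in>insert a S. c v \<noteq> 0})"
      by (rule Sup_subset_mono) auto
    then show "\<phi> (lincomb S c) \<le> Sup (\<phi> ` {v\<in>insert a S. c v \<noteq> 0})"
      using insert by (meson insert_subset order_trans)
  qed
  finally show ?case .
qed simp

end

definition orthogonal :: "('v \<Rightarrow> ereal) \<Rightarrow> 'v set \<Rightarrow> bool" where
  "orthogonal \<phi> B \<longleftrightarrow>
     (\<forall>S c. finite S \<longrightarrow> S \<subseteq> B \<longrightarrow> \<phi> (lincomb S c) = Sup (\<phi> ` {v\<in>S. c v \<noteq> 0}))"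

lemma orthogonalD:
  "orthogonal \<phi> B \<Longrightarrow> finite S \<Longrightarrow> S \<subseteq> B \<Longrightarrow> \<phi> (lincomb S c) = Sup (\<phi> ` {v\<in>S. c v \<noteq> 0})"
  unfolding orthogonal_def by blast

lemma orthogonal_indep:
  assumes "orthogonal \<phi> B" "\<And>b. b \<in> B \<Longrightarrow> \<phi> b \<noteq> -\<infinity>" "\<phi> (zer C) = -\<infinity>"
    "finite S" "S \<subseteq> B" "lincomb S c = zer C" "v \<in> S"
  shows "c v = 0"
proof (rule ccontr)
  assume "c v \<noteq> 0"
  then have "\<phi> v \<le> Sup (\<phi> ` {v\<in>S. c v \<noteq> 0})"
    using assms by (intro Sup_upper) auto
  also have "\<dots> = -\<infinity>"
    using assms orthogonalD[of \<phi> B S c] by simp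
  finally show False
    using assms by auto
qed

end

lemma ereal_Sup_finite_less:
  fixes X :: "ereal set"
  assumes "finite X" "\<And>r. r \<in> X \<Longrightarrow> r < s" "s \<noteq> -\<infinity>"
  shows "Sup X < s"
proof (cases "X = {}")
  case True
  then show ?thesis
    using assms by (cases s) (auto simp: bot_ereal_def)
next
  case False
  then have "Sup X = Max X"
    using assms by (simp add: Max_Sup)
  moreover have "Max X \<in> X"
    using assms False by simp
  ultimately show ?thesis
    using assms by simp
qed

lemma well_ordered_setD: "well_ordered_set S \<Longrightarrow> T \<subseteq> S \<Longrightarrow> T \<noteq> {} \<Longrightarrow> \<exists>m\<in>T. \<forall>t\<in>T. m \<le> t"
  unfolding well_ordered_set_def by blast

lemma well_ordered_set_subset: "well_ordered_set S \<Longrightarrow> T \<subseteq> S \<Longrightarrow> well_ordered_set T"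
  unfolding well_ordered_set_def by blast

lemma well_ordered_set_finite:
  assumes "finite S"
  shows "well_ordered_set S"
  unfolding well_ordered_set_def
proof (intro allI impI)
  fix T assume "T \<subseteq> S" "T \<noteq> {}"
  then have "finite T" "T \<noteq> {}"
    using assms by (auto intro: finite_subset)
  then show "\<exists>m\<in>T. \<forall>t\<in>T. m \<le> t"
    by (intro bexI[of _ "Min T"]) auto
qed

context acc_vspace
begin

definition orthogonal_basis :: "('v \<Rightarrow> ereal) \<Rightarrow> 'v set \<Rightarrow> 'v set \<Rightarrow> bool" where
  "orthogonal_basis \<phi> U B \<longleftrightarrow> B \<subseteq> U - {zer C} \<and> orthogonal \<phi> B \<and> U \<subseteq> lin_span B"

context
  fixes \<phi> U
  assumes U: "is_subspace U" and filt: "filtration U \<phi>"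
begin

lemma filtration_lincomb_le_bound:
  assumes "finite S" "S \<subseteq> U" "\<And>v. v \<in> S \<Longrightarrow> (c :: 'v \<Rightarrow> 'k) v \<noteq> 0 \<Longrightarrow> \<phi> v \<le> s"
  shows "\<phi> (lincomb S c) \<le> s"
proof -
  have "\<phi> (lincomb S c) \<le> Sup (\<phi> ` {v\<in>S. c v \<noteq> 0})"
    using filtration_lincomb_le[OF U filt assms(1,2)] .
  also have "\<dots> \<le> s"
    using assms(3) by (intro Sup_least) auto
  finally show ?thesis .
qed

lemma filtration_lincomb_less_bound:
  assumes "finite S" "S \<subseteq> U" "\<And>v. v \<in> S \<Longrightarrow> (c :: 'v \<Rightarrow> 'k) v \<noteq> 0 \<Longrightarrow> \<phi> v < s" "s \<noteq> -\<infinity>"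
  shows "\<phi> (lincomb S c) < s"
proof -
  have "\<phi> (lincomb S c) \<le> Sup (\<phi> ` {v\<in>S. c v \<noteq> 0})"
    using filtration_lincomb_le[OF U filt assms(1,2)] .
  also have "\<dots> < s"
    using assms(1,3,4) by (intro ereal_Sup_finite_less) auto
  finally show ?thesis .
qed

lemma orthogonalI:
  assumes "B \<subseteq> U"
    and ge: "\<And>S (c :: 'v \<Rightarrow> 'k). finite S \<Longrightarrow> S \<subseteq> B \<Longrightarrow> S \<noteq> {} \<Longrightarrow> (\<And>v. v \<in> S \<Longrightarrow> c v \<noteq> 0) \<Longrightarrow>
      Sup (\<phi> ` S) \<le> \<phi> (lincomb S c)"
  shows "orthogonal \<phi> B"
  unfolding orthogonal_def
proof (intro allI impI)
  fix S and c :: "'v \<Rightarrow> 'k" assume S: "finite S" "S \<subseteq> B"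
  define S' where "S' = {v\<in>S. c v \<noteq> 0}"
  have S': "finite S'" "S' \<subseteq> B" "S' \<subseteq> U"
    using S assms(1) unfolding S'_def by auto
  have eq: "lincomb S c = lincomb S' c"
    unfolding S'_def using S assms(1) is_subspaceD(1)[OF U] by (intro lincomb_support) auto
  show "\<phi> (lincomb S c) = Sup (\<phi> ` S')"
  proof (cases "S' = {}")
    case True
    then show ?thesis
      using eq filtration_zer[OF U filt] by (simp add: bot_ereal_def)
  next
    case False
    have "\<phi> (lincomb S' c) \<le> Sup (\<phi> ` S')"
      using filtration_lincomb_le[OF U filt S'(1,3), of c] by (simp add: S'_def)
    moreover have "Sup (\<phi> ` S') \<le> \<phi> (lincomb S' c)"
      using ge[OF S'(1,2) False] by (auto simp: S'_def)
    ultimately show ?thesis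
      using eq by simp
  qed
qed

end

subsection \<open>Bases orthogonal for two filtrations\<close>

lemma subspace_sublevel_set:
  assumes U: "is_subspace U" and f\<phi>: "filtration U \<phi>" and f\<psi>: "filtration U \<psi>"
    and P: "\<And>a b. a \<le> b \<Longrightarrow> P b \<Longrightarrow> P a" "P (-\<infinity>)"
    and Q: "\<And>a b. a \<le> b \<Longrightarrow> Q b \<Longrightarrow> Q a" "Q (-\<infinity>)"
  shows "is_subspace {x\<in>U. P (\<phi> x) \<and> Q (\<psi> x)}"
proof (rule is_subspaceI)
  show "{x\<in>U. P (\<phi> x) \<and> Q (\<psi> x)} \<subseteq> car C"
    using is_subspaceD[OF U] by auto
  show "zer C \<in> {x\<in>U. P (\<phi> x) \<and> Q (\<psi> x)}"
    using is_subspaceD[OF U] filtration_zer[OF U f\<phi>] filtration_zer[OF U f\<psi>] P Q by simp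
next
  fix x y assume x: "x \<in> {x\<in>U. P (\<phi> x) \<and> Q (\<psi> x)}" and y: "y \<in> {x\<in>U. P (\<phi> x) \<and> Q (\<psi> x)}"
  have "P (max (\<phi> x) (\<phi> y))" "Q (max (\<psi> x) (\<psi> y))"
    using x y by (simp_all add: max_def)
  then have "P (\<phi> (add C x y))" "Q (\<psi> (add C x y))"
    using x y P(1) Q(1) filtration_add[OF U f\<phi>, of x y] filtration_add[OF U f\<psi>, of x y] by auto
  then show "add C x y \<in> {x\<in>U. P (\<phi> x) \<and> Q (\<psi> x)}"
    using x y is_subspaceD[OF U] by simp
next
  fix c x assume x: "x \<in> {x\<in>U. P (\<phi> x) \<and> Q (\<psi> x)}"
  then have "P (\<phi> (smul C c x))" "Q (\<psi> (smul C c x))"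
    using P(1) Q(1) filtration_smul_le[OF U f\<phi>, of x c] filtration_smul_le[OF U f\<psi>, of x c] by auto
  then show "smul C c x \<in> {x\<in>U. P (\<phi> x) \<and> Q (\<psi> x)}"
    using x is_subspaceD[OF U] by simp
qed

text \<open>For two filtrations \<open>\<phi>\<close>, \<open>\<psi>\<close> the vectors of bilevel at most \<open>(s, t)\<close> form the space
  \<open>sublevel\<close>; modulo \<open>sublevel_lower\<close>, the vectors that are strictly lower in one of the
  two filtrations, it is the graded piece at \<open>(s, t)\<close>.\<close>

definition sublevel :: "'v set \<Rightarrow> ('v \<Rightarrow> ereal) \<Rightarrow> ('v \<Rightarrow> ereal) \<Rightarrow> ereal \<Rightarrow> ereal \<Rightarrow> 'v set" where
  "sublevel U \<phi> \<psi> s t = {x\<in>U. \<phi> x \<le> s \<and> \<psi> x \<le> t}"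

definition sublevel_strict :: "'v set \<Rightarrow> ('v \<Rightarrow> ereal) \<Rightarrow> ('v \<Rightarrow> ereal) \<Rightarrow> ereal \<Rightarrow> ereal \<Rightarrow> 'v set" where
  "sublevel_strict U \<phi> \<psi> s t = {x\<in>U. (\<phi> x < s \<or> \<phi> x = -\<infinity>) \<and> \<psi> x \<le> t}"

definition sublevel_lower :: "'v set \<Rightarrow> ('v \<Rightarrow> ereal) \<Rightarrow> ('v \<Rightarrow> ereal) \<Rightarrow> ereal \<Rightarrow> ereal \<Rightarrow> 'v set" where
  "sublevel_lower U \<phi> \<psi> s t = ssum (sublevel_strict U \<phi> \<psi> s t) (sublevel_strict U \<psi> \<phi> t s)"

lemma lincomb_in_sublevel_strict:
  assumes U: "is_subspace U" and f\<phi>: "filtration U \<phi>" and f\<psi>: "filtration U \<psi>"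
    and R: "finite R" "R \<subseteq> U" "\<And>v. v \<in> R \<Longrightarrow> \<phi> v < s \<and> \<psi> v \<le> t"
  shows "lincomb R c \<in> sublevel_strict U \<phi> \<psi> s t"
proof (cases "s = -\<infinity>")
  case True
  then have "R = {}"
    using R(3) by fastforce
  then show ?thesis
    using is_subspaceD(2)[OF U] filtration_zer[OF U f\<phi>] filtration_zer[OF U f\<psi>]
    unfolding sublevel_strict_def by simp
next
  case False
  have "\<phi> (lincomb R c) < s"
    using R False by (intro filtration_lincomb_less_bound[OF U f\<phi>]) auto
  moreover have "\<psi> (lincomb R c) \<le> t"
    using R by (intro filtration_lincomb_le_bound[OF U f\<psi>]) auto
  moreover have "lincomb R c \<in> U"
    using R by (intro subspace_lincomb[OF U])
  ultimately show ?thesis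
    unfolding sublevel_strict_def by simp
qed

context
  fixes U \<phi> \<psi>
  assumes U: "is_subspace U" and f\<phi>: "filtration U \<phi>" and f\<psi>: "filtration U \<psi>"
begin

lemma subspace_sublevel: "is_subspace (sublevel U \<phi> \<psi> s t)"
  unfolding sublevel_def by (rule subspace_sublevel_set[OF U f\<phi> f\<psi>]) auto

lemma subspace_sublevel_strict: "is_subspace (sublevel_strict U \<phi> \<psi> s t)"
  unfolding sublevel_strict_def by (rule subspace_sublevel_set[OF U f\<phi> f\<psi>]) auto

lemma subspace_sublevel_strict': "is_subspace (sublevel_strict U \<psi> \<phi> t s)"
  unfolding sublevel_strict_def by (rule subspace_sublevel_set[OF U f\<psi> f\<phi>]) auto

lemma subspace_sublevel_lower: "is_subspace (sublevel_lower U \<phi> \<psi> s t)"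
  unfolding sublevel_lower_def by (intro ssum_subspace subspace_sublevel_strict subspace_sublevel_strict')

lemma sublevel_lower_swap: "sublevel_lower U \<psi> \<phi> t s = sublevel_lower U \<phi> \<psi> s t"
  unfolding sublevel_lower_def by (intro ssum_comm subspace_sublevel_strict subspace_sublevel_strict')

lemma lincomb_top_in_sublevel_lower:
  assumes S: "finite S" "S \<subseteq> U"
    and s: "s \<noteq> -\<infinity>" "\<And>v. v \<in> S \<Longrightarrow> \<phi> v \<le> s" "\<phi> (lincomb S c) < s"
    and t: "\<And>v. v \<in> S \<Longrightarrow> \<phi> v = s \<Longrightarrow> \<psi> v \<le> t"
  shows "lincomb {v\<in>S. \<phi> v = s \<and> \<psi> v = t} c \<in> sublevel_lower U \<phi> \<psi> s t"
proof -
  note Us = is_subspaceD[OF U]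
  define Ss where "Ss = {v\<in>S. \<phi> v = s}"
  define Top where "Top = {v\<in>S. \<phi> v = s \<and> \<psi> v = t}"
  have sub: "Ss \<subseteq> S" "Top \<subseteq> Ss" "S \<subseteq> car C"
    using S Us unfolding Ss_def Top_def by auto
  have fin: "finite Ss" "finite (S - Ss)" "finite (Ss - Top)"
    using S(1) sub by (auto intro: finite_subset)
  have in_U: "lincomb S c \<in> U" "lincomb Ss c \<in> U" "lincomb (S - Ss) c \<in> U"
    "lincomb Top c \<in> U" "lincomb (Ss - Top) c \<in> U"
    using S(2) sub by (auto intro!: subspace_lincomb[OF U])
  have "lincomb S c = add C (lincomb Ss c) (lincomb (S - Ss) c)"
    using lincomb_split[OF S(1) sub(3), of c Ss] sub by (simp add: Int_absorb1)
  then have Ss_eq: "lincomb Ss c = add C (lincomb S c) (neg (lincomb (S - Ss) c))"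
    using in_U sub Us by (intro eq_add_neg_if_add_eq) auto
  have "lincomb Ss c = add C (lincomb Top c) (lincomb (Ss - Top) c)"
    using lincomb_split[OF fin(1), of c Top] sub by (simp add: Int_absorb1)
  then have Top_eq: "lincomb Top c = add C (lincomb Ss c) (neg (lincomb (Ss - Top) c))"
    using in_U sub Us by (intro eq_add_neg_if_add_eq) auto
  have "\<phi> (lincomb (S - Ss) c) < s"
    using s S by (intro filtration_lincomb_less_bound[OF U f\<phi>] fin) (auto simp: Ss_def less_le)
  moreover have "\<phi> (lincomb Ss c) \<le> max (\<phi> (lincomb S c)) (\<phi> (neg (lincomb (S - Ss) c)))"
    unfolding Ss_eq using in_U Us by (intro filtration_add[OF U f\<phi>]) auto
  ultimately have "\<phi> (lincomb Ss c) < s"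
    using s(3) filtration_neg[OF U f\<phi>] in_U by (simp add: le_less_trans)
  moreover have "\<psi> (lincomb Ss c) \<le> t"
    using fin sub S t by (intro filtration_lincomb_le_bound[OF U f\<psi>]) (auto simp: Ss_def)
  ultimately have "lincomb Ss c \<in> sublevel_strict U \<phi> \<psi> s t"
    unfolding sublevel_strict_def using in_U sub by auto
  moreover have "neg (lincomb (Ss - Top) c) \<in> sublevel_strict U \<psi> \<phi> t s"
  proof -
    have "\<psi> v < t \<and> \<phi> v \<le> s" if "v \<in> Ss - Top" for v
      using that t s(2) unfolding Ss_def Top_def by (auto simp: less_le)
    then have "lincomb (Ss - Top) c \<in> sublevel_strict U \<psi> \<phi> t s"
      using fin(3) sub S(2) by (intro lincomb_in_sublevel_strict[OF U f\<psi> f\<phi>]) auto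
    then show ?thesis
      by (rule is_subspaceD(5)[OF subspace_sublevel_strict'])
  qed
  ultimately have "lincomb Top c \<in> sublevel_lower U \<phi> \<psi> s t"
    unfolding sublevel_lower_def Top_eq by (rule mem_ssumI)
  then show ?thesis
    unfolding Top_def .
qed

lemma orthogonal_if_indep_mod_sublevel_lower:
  assumes B: "\<And>s t b. b \<in> Bf s t \<Longrightarrow> b \<in> U \<and> \<phi> b = s \<and> \<psi> b = t \<and> b \<noteq> zer C"
    and indep: "\<And>s t. indep_mod (sublevel_lower U \<phi> \<psi> s t) (Bf s t)"
  shows "orthogonal \<phi> (\<Union>s t. Bf s t)"
proof (rule orthogonalI[OF U f\<phi>])
  show "(\<Union>s t. Bf s t) \<subseteq> U"
    using B by blast
  fix S and c :: "'v \<Rightarrow> 'k"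
  assume S: "finite S" "S \<subseteq> (\<Union>s t. Bf s t)" "S \<noteq> {}" and nz: "\<And>v. v \<in> S \<Longrightarrow> c v \<noteq> 0"
  have SU: "S \<subseteq> U"
    using S B by blast
  define s where "s = Max (\<phi> ` S)"
  define t where "t = Max (\<psi> ` {v\<in>S. \<phi> v = s})"
  define Top where "Top = {v\<in>S. \<phi> v = s \<and> \<psi> v = t}"
  have s_ge: "\<phi> v \<le> s" if "v \<in> S" for v
    using S(1) that unfolding s_def by simp
  have "s \<in> \<phi> ` S"
    using S(1,3) unfolding s_def by simp
  then obtain v0 where v0: "v0 \<in> S" "\<phi> v0 = s"
    by auto
  then have "s \<noteq> -\<infinity>"
    using SU B filtration_eq_minf_iff[OF U f\<phi>] S(2) by blast
  have t_ge: "\<psi> v \<le> t" if "v \<in> S" "\<phi> v = s" for v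
    using S(1) that unfolding t_def by simp
  have "t \<in> \<psi> ` {v\<in>S. \<phi> v = s}"
    using S(1) v0 unfolding t_def by (intro Max_in) auto
  then have Top_ne: "Top \<noteq> {}"
    unfolding Top_def by blast
  have Top_B: "Top \<subseteq> Bf s t"
  proof
    fix v assume v: "v \<in> Top"
    then obtain s' t' where "v \<in> Bf s' t'"
      using S unfolding Top_def by blast
    then show "v \<in> Bf s t"
      using v B[of v s' t'] unfolding Top_def by auto
  qed
  show "Sup (\<phi> ` S) \<le> \<phi> (lincomb S c)"
  proof (rule ccontr)
    assume "\<not> ?thesis"
    then have "\<phi> (lincomb S c) < s"
      using S by (simp add: s_def Max_Sup)
    then have "lincomb Top c \<in> sublevel_lower U \<phi> \<psi> s t"
      unfolding Top_def using S(1) SU \<open>s \<noteq> -\<infinity>\<close> s_ge t_ge by (intro lincomb_top_in_sublevel_lower)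
    moreover have "finite Top"
      using S(1) unfolding Top_def by simp
    ultimately have "\<forall>v\<in>Top. c v = 0"
      using indep[of s t] Top_B unfolding indep_mod_def by blast
    then show False
      using Top_ne nz unfolding Top_def by auto
  qed
qed

lemma basis_mod_sublevel_lower_level:
  assumes "B \<subseteq> sublevel U \<phi> \<psi> s t" "indep_mod (sublevel_lower U \<phi> \<psi> s t) B" "b \<in> B"
  shows "b \<in> U \<and> \<phi> b = s \<and> \<psi> b = t \<and> b \<noteq> zer C"
proof -
  have b: "b \<in> U" "\<phi> b \<le> s" "\<psi> b \<le> t" "b \<in> car C"
    using assms is_subspaceD(1)[OF U] unfolding sublevel_def by auto
  have out: "b \<notin> sublevel_lower U \<phi> \<psi> s t"
    using indep_mod_disjoint[OF assms(2,3) b(4)] .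
  have zer: "zer C \<in> sublevel_strict U \<phi> \<psi> s t" "zer C \<in> sublevel_strict U \<psi> \<phi> t s"
    using is_subspaceD(2)[OF subspace_sublevel_strict] is_subspaceD(2)[OF subspace_sublevel_strict'] .
  have "b \<notin> sublevel_strict U \<phi> \<psi> s t"
    using out mem_ssumI[OF _ zer(2), of b] b unfolding sublevel_lower_def by auto
  moreover have "b \<notin> sublevel_strict U \<psi> \<phi> t s"
    using out mem_ssumI[OF zer(1), of b] b unfolding sublevel_lower_def by auto
  ultimately show ?thesis
    using b zer unfolding sublevel_strict_def by (auto simp: less_le)
qed

text \<open>Spanning is proved by a minimal counterexample, minimal first in \<open>\<phi>\<close> and then in \<open>\<psi>\<close>.\<close>

lemma lin_span_of_sublevel_bases:
  assumes w\<phi>: "well_ordered_set (\<phi> ` (U - {zer C}))" and w\<psi>: "well_ordered_set (\<psi> ` (U - {zer C}))"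
    and Bf: "\<And>s t. Bf s t \<subseteq> U" "\<And>s t. sublevel U \<phi> \<psi> s t \<subseteq> ssum (lin_span (Bf s t)) (sublevel_lower U \<phi> \<psi> s t)"
  shows "U \<subseteq> lin_span (\<Union>s t. Bf s t)"
proof (rule ccontr)
  define L where "L = lin_span (\<Union>s t. Bf s t)"
  have L: "is_subspace L"
    unfolding L_def using Bf(1) is_subspaceD(1)[OF U] by (intro lin_span_subspace) blast
  define bad where "bad = U - L"
  assume "\<not> U \<subseteq> lin_span (\<Union>s t. Bf s t)"
  then have "bad \<noteq> {}" and bad_nz: "zer C \<notin> bad"
    using is_subspaceD(2)[OF L] unfolding bad_def L_def by auto
  then obtain s0 where s0: "s0 \<in> \<phi> ` bad" "\<forall>r\<in>\<phi> ` bad. s0 \<le> r"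
    using well_ordered_setD[OF w\<phi>, of "\<phi> ` bad"] unfolding bad_def by blast
  then obtain t0 where t0: "t0 \<in> \<psi> ` {x\<in>bad. \<phi> x = s0}" "\<forall>r\<in>\<psi> ` {x\<in>bad. \<phi> x = s0}. t0 \<le> r"
    using well_ordered_setD[OF w\<psi>, of "\<psi> ` {x\<in>bad. \<phi> x = s0}"] bad_nz unfolding bad_def by blast
  then obtain x where x: "x \<in> bad" "\<phi> x = s0" "\<psi> x = t0"
    by auto
  then have "x \<in> sublevel U \<phi> \<psi> s0 t0"
    unfolding sublevel_def bad_def by simp
  then obtain l a1 a2 where decomp: "l \<in> lin_span (Bf s0 t0)" "x = add C l (add C a1 a2)"
    "a1 \<in> sublevel_strict U \<phi> \<psi> s0 t0" "a2 \<in> sublevel_strict U \<psi> \<phi> t0 s0"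
    using Bf(2) unfolding sublevel_lower_def by (blast elim: mem_ssumE)
  have "a1 \<notin> bad"
    using decomp(3) s0 bad_nz filtration_eq_minf_iff[OF U f\<phi>] unfolding sublevel_strict_def
    by (metis (mono_tags, lifting) image_eqI mem_Collect_eq not_le)
  moreover have "a2 \<notin> bad"
  proof
    assume a2: "a2 \<in> bad"
    then have "\<phi> a2 = s0"
      using decomp(4) s0 unfolding sublevel_strict_def by (auto intro: antisym)
    then have "t0 \<le> \<psi> a2"
      using a2 t0 by auto
    then show False
      using a2 decomp(4) bad_nz filtration_eq_minf_iff[OF U f\<psi>] unfolding sublevel_strict_def bad_def
      by auto
  qed
  moreover have "l \<in> L"
    using decomp(1) lin_span_mono[of "Bf s0 t0" "\<Union>s t. Bf s t"] unfolding L_def by blast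
  ultimately have "x \<in> L"
    using decomp is_subspaceD[OF L] unfolding bad_def sublevel_strict_def by auto
  then show False
    using x unfolding bad_def by blast
qed

lemma ex_bi_orthogonal_basis:
  assumes w\<phi>: "well_ordered_set (\<phi> ` (U - {zer C}))" and w\<psi>: "well_ordered_set (\<psi> ` (U - {zer C}))"
  shows "\<exists>B. orthogonal_basis \<phi> U B \<and> orthogonal \<psi> B"
proof -
  define P where "P s t S \<longleftrightarrow> S \<subseteq> sublevel U \<phi> \<psi> s t \<and> indep_mod (sublevel_lower U \<phi> \<psi> s t) S \<and>
    sublevel U \<phi> \<psi> s t \<subseteq> ssum (lin_span S) (sublevel_lower U \<phi> \<psi> s t)" for s t S
  define Bf where "Bf s t = (SOME S. P s t S)" for s t
  have "P s t (Bf s t)" for s t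
    unfolding Bf_def P_def by (rule someI_ex, rule ex_basis_mod) (intro subspace_sublevel_lower subspace_sublevel)+
  then have Bf: "Bf s t \<subseteq> sublevel U \<phi> \<psi> s t" "indep_mod (sublevel_lower U \<phi> \<psi> s t) (Bf s t)"
    "sublevel U \<phi> \<psi> s t \<subseteq> ssum (lin_span (Bf s t)) (sublevel_lower U \<phi> \<psi> s t)" for s t
    unfolding P_def by blast+
  have level: "b \<in> U \<and> \<phi> b = s \<and> \<psi> b = t \<and> b \<noteq> zer C" if "b \<in> Bf s t" for b s t
    using basis_mod_sublevel_lower_level[OF Bf(1,2) that] .
  have "orthogonal \<phi> (\<Union>s t. Bf s t)"
    using level Bf(2) by (rule orthogonal_if_indep_mod_sublevel_lower)
  moreover have "orthogonal \<psi> (\<Union>t s. Bf s t)"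
    using acc_vspace.orthogonal_if_indep_mod_sublevel_lower[OF acc_vspace_axioms U f\<psi> f\<phi>, of "\<lambda>t s. Bf s t"]
      level Bf(2) sublevel_lower_swap by auto
  moreover have "(\<Union>t s. Bf s t) = (\<Union>s t. Bf s t)"
    by blast
  moreover have "U \<subseteq> lin_span (\<Union>s t. Bf s t)"
    using w\<phi> w\<psi> Bf(3) level by (intro lin_span_of_sublevel_bases) blast+
  moreover have "(\<Union>s t. Bf s t) \<subseteq> U - {zer C}"
    using level by blast
  ultimately show ?thesis
    unfolding orthogonal_basis_def by (intro exI[of _ "\<Union>s t. Bf s t"]) simp
qed

end

lemma orthogonal_exchange:
  assumes U: "is_subspace U" and Q: "orthogonal \<phi> Q" "Q \<subseteq> car C" "U \<subseteq> lin_span (Q \<inter> U)"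
    and P: "orthogonal \<phi> P" "P \<subseteq> U"
  shows "orthogonal \<phi> (P \<union> (Q - U))"
  unfolding orthogonal_def
proof (intro allI impI)
  fix S and c :: "'v \<Rightarrow> 'k" assume S: "finite S" "S \<subseteq> P \<union> (Q - U)"
  define S1 where "S1 = S \<inter> P"
  define S2 where "S2 = S - P"
  have S12: "finite S1" "finite S2" "S1 \<subseteq> P" "S2 \<subseteq> Q - U"
    using S unfolding S1_def S2_def by auto
  have SC: "S \<subseteq> car C"
    using S P(2) Q(2) is_subspaceD(1)[OF U] by blast
  have "lincomb S1 c \<in> U"
    using S12(3) P(2) subspace_lincomb[OF U] by blast
  then obtain T d where T: "finite T" "T \<subseteq> Q \<inter> U" "lincomb S1 c = lincomb T d"
    using Q(3) lin_spanE by blast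
  have TS2: "T \<inter> S2 = {}" "T \<union> S2 \<subseteq> Q" "T \<subseteq> car C" "S2 \<subseteq> car C"
    using T S12 Q(2) by auto
  define e where "e v = (if v \<in> T then d v else c v)" for v
  have "lincomb S c = add C (lincomb S1 c) (lincomb S2 c)"
    unfolding S1_def S2_def by (rule lincomb_split[OF S(1) SC])
  also have "lincomb S1 c = lincomb T e"
    unfolding T(3) using TS2(3) by (intro lincomb_cong) (auto simp: e_def)
  also have "lincomb S2 c = lincomb S2 e"
    using TS2(1,4) by (intro lincomb_cong) (auto simp: e_def)
  also have "add C (lincomb T e) (lincomb S2 e) = lincomb (T \<union> S2) e"
    using T(1) S12(2) TS2 by (intro lincomb_Un_disjoint[symmetric]) auto
  finally have "\<phi> (lincomb S c) = Sup (\<phi> ` {v\<in>T \<union> S2. e v \<noteq> 0})"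
    using orthogonalD[OF Q(1) _ TS2(2), of e] T(1) S12(2) by simp
  also have "{v\<in>T \<union> S2. e v \<noteq> 0} = {v\<in>T. d v \<noteq> 0} \<union> {v\<in>S2. c v \<noteq> 0}"
    using TS2(1) unfolding e_def by auto
  also have "Sup (\<phi> ` \<dots>) = max (\<phi> (lincomb T d)) (Sup (\<phi> ` {v\<in>S2. c v \<noteq> 0}))"
    using orthogonalD[OF Q(1) T(1), of d] T(2) by (simp add: image_Un Sup_union_distrib sup_max)
  also have "\<phi> (lincomb T d) = Sup (\<phi> ` {v\<in>S1. c v \<noteq> 0})"
    using orthogonalD[OF P(1) S12(1,3), of c] T(3) by simp
  also have "max \<dots> (Sup (\<phi> ` {v\<in>S2. c v \<noteq> 0})) = Sup (\<phi> ` {v\<in>S. c v \<noteq> 0})"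
  proof -
    have "{v\<in>S. c v \<noteq> 0} = {v\<in>S1. c v \<noteq> 0} \<union> {v\<in>S2. c v \<noteq> 0}"
      unfolding S1_def S2_def by auto
    then show ?thesis
      by (simp add: image_Un Sup_union_distrib sup_max)
  qed
  finally show "\<phi> (lincomb S c) = Sup (\<phi> ` {v\<in>S. c v \<noteq> 0})" .
qed

lemma lin_span_exchange:
  assumes U: "is_subspace U" and Q: "Q \<subseteq> car C" "W \<subseteq> lin_span Q" and P: "P \<subseteq> car C" "U \<subseteq> lin_span P"
  shows "W \<subseteq> lin_span (P \<union> (Q - U))"
proof
  fix x assume "x \<in> W"
  then obtain T c where T: "finite T" "T \<subseteq> Q" "x = lincomb T c"
    using Q(2) by (blast elim: lin_spanE)
  have L: "is_subspace (lin_span (P \<union> (Q - U)))"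
    using P Q by (intro lin_span_subspace) auto
  have "lincomb (T \<inter> U) c \<in> U"
    by (intro subspace_lincomb[OF U]) auto
  then have "lincomb (T \<inter> U) c \<in> lin_span (P \<union> (Q - U))"
    using P(2) lin_span_mono[of P "P \<union> (Q - U)"] by blast
  moreover have "lincomb (T - U) c \<in> lin_span (P \<union> (Q - U))"
    using T by (intro lin_spanI) auto
  moreover have "x = add C (lincomb (T \<inter> U) c) (lincomb (T - U) c)"
    using T Q(1) lincomb_split[of T c U] by auto
  ultimately show "x \<in> lin_span (P \<union> (Q - U))"
    using is_subspaceD(3)[OF L] by simp
qed

lemma orthogonal_basis_exchange:
  assumes W: "is_subspace W" and U: "is_subspace U" "U \<subseteq> W"
    and Q: "orthogonal_basis \<phi> W Q" "U \<subseteq> lin_span (Q \<inter> U)" and P: "orthogonal_basis \<phi> U P"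
  shows "orthogonal_basis \<phi> W (P \<union> (Q - U))"
proof -
  have sub: "Q \<subseteq> W - {zer C}" "P \<subseteq> U - {zer C}" and car: "Q \<subseteq> car C" "P \<subseteq> car C"
    using Q(1) P U is_subspaceD(1)[OF W] unfolding orthogonal_basis_def by auto
  have "orthogonal \<phi> (P \<union> (Q - U))"
    using Q(1) P sub by (intro orthogonal_exchange[OF U(1) _ car(1) Q(2)]) (auto simp: orthogonal_basis_def)
  moreover have "W \<subseteq> lin_span (P \<union> (Q - U))"
    using Q(1) P by (intro lin_span_exchange[OF U(1) car(1) _ car(2)]) (auto simp: orthogonal_basis_def)
  ultimately show ?thesis
    using sub U(2) unfolding orthogonal_basis_def by auto
qed

text \<open>A family that is orthogonal for the indicator filtration of \<open>R\<close> restricts to a spanning family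
  of \<open>R\<close>; combined with \<open>ex_bi_orthogonal_basis\<close> this yields bases adapted to a subspace.\<close>

definition indicator_filtration :: "'v set \<Rightarrow> 'v \<Rightarrow> ereal" where
  "indicator_filtration R x = (if x = zer C then -\<infinity> else if x \<in> R then 0 else 1)"

lemma filtration_indicator:
  assumes R: "is_subspace R"
  shows "filtration K (indicator_filtration R)"
  unfolding filtration_def
proof (intro conjI ballI allI)
  note Rs = is_subspaceD[OF R]
  show "indicator_filtration R x = -\<infinity> \<longleftrightarrow> x = zer C" for x
    unfolding indicator_filtration_def by auto
  show "indicator_filtration R (add C x y) \<le> max (indicator_filtration R x) (indicator_filtration R y)"
    if "x \<in> K" "y \<in> K" for x y
  proof (cases "x \<in> R \<and> y \<in> R")
    case True
    then show ?thesis
      using Rs unfolding indicator_filtration_def by (auto simp: max_def)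
  next
    case False
    then show ?thesis
      using Rs unfolding indicator_filtration_def by (auto simp: max_def)
  qed
  show "indicator_filtration R (smul C c x) \<le> indicator_filtration R x" if "x \<in> K" for c x
    using Rs unfolding indicator_filtration_def by auto
qed

lemma well_ordered_indicator: "well_ordered_set (indicator_filtration R ` X)"
proof -
  have "indicator_filtration R ` X \<subseteq> {-\<infinity>, 0, 1}"
    unfolding indicator_filtration_def by auto
  then show ?thesis
    using well_ordered_set_finite[of "{-\<infinity>, 0, 1::ereal}"] well_ordered_set_subset by blast
qed

lemma lin_span_restrict_if_orthogonal_indicator:
  assumes Q: "orthogonal (indicator_filtration R) Q" "Q \<subseteq> car C - {zer C}" and R: "R \<subseteq> lin_span Q"
  shows "R \<subseteq> lin_span (Q \<inter> R)"
proof
  fix x assume x: "x \<in> R"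
  then obtain T c where T: "finite T" "T \<subseteq> Q" "x = lincomb T c"
    using R by (blast elim: lin_spanE)
  define T' where "T' = {v\<in>T. c v \<noteq> 0}"
  have x': "x = lincomb T' c"
    unfolding T'_def using T Q(2) lincomb_support[of T c] by auto
  have "T' \<subseteq> R"
  proof
    fix v assume v: "v \<in> T'"
    show "v \<in> R"
    proof (rule ccontr)
      assume "v \<notin> R"
      then have "1 = indicator_filtration R v"
        using v T Q(2) unfolding T'_def indicator_filtration_def by auto
      also have "\<dots> \<le> Sup (indicator_filtration R ` {v\<in>T'. c v \<noteq> 0})"
        using v unfolding T'_def by (intro Sup_upper) auto
      also have "\<dots> = indicator_filtration R x"
        using orthogonalD[OF Q(1), of T' c] T x' unfolding T'_def by (simp add: subset_iff)
      finally show False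
        using x unfolding indicator_filtration_def by (auto split: if_splits)
    qed
  qed
  then show "x \<in> lin_span (Q \<inter> R)"
    unfolding x' using T by (intro lin_spanI) (auto simp: T'_def)
qed

end

locale wo_asc_complex = acc_vspace C for C :: "('k::field, 'v) acc" +
  assumes asc: "asc_complex C"
    and well_ordered: "\<forall>n. well_ordered_set (filt C ` (deg C n - {zer C}))"
begin

lemma chain_complex: "chain_cx C"
  using asc unfolding asc_complex_def by blast

lemma graded: "graded C"
  using chain_complex unfolding chain_cx_def by blast

lemma deg_subspace: "is_subspace (deg C n)"
  using graded unfolding graded_def is_subspace_def by blast

lemma deg_car: "x \<in> deg C n \<Longrightarrow> x \<in> car C"
  using is_subspaceD(6)[OF deg_subspace] .

lemma graded_decomp: "x \<in> car C \<Longrightarrow> \<exists>m f d. (\<forall>i<m. f i \<in> deg C (d i)) \<and> x = vsumn C f m"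
  using graded unfolding graded_def by blast

lemma graded_unique:
  "inj_on d {..<m} \<Longrightarrow> \<forall>i<m. f i \<in> deg C (d i) \<Longrightarrow> vsumn C f m = zer C \<Longrightarrow> i < m \<Longrightarrow> f i = zer C"
  using graded unfolding graded_def by blast

lemma bd_closed [simp]: "x \<in> car C \<Longrightarrow> bd C x \<in> car C"
  using chain_complex unfolding chain_cx_def by blast

lemma bd_add: "x \<in> car C \<Longrightarrow> y \<in> car C \<Longrightarrow> bd C (add C x y) = add C (bd C x) (bd C y)"
  using chain_complex unfolding chain_cx_def by blast

lemma bd_smul: "x \<in> car C \<Longrightarrow> bd C (smul C c x) = smul C c (bd C x)"
  using chain_complex unfolding chain_cx_def by blast

lemma bd_deg: "x \<in> deg C (n + 1) \<Longrightarrow> bd C x \<in> deg C n"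
  using chain_complex unfolding chain_cx_def by blast

lemma bd_bd [simp]: "x \<in> car C \<Longrightarrow> bd C (bd C x) = zer C"
  using chain_complex unfolding chain_cx_def by blast

lemma bd_zer [simp]: "bd C (zer C) = zer C"
  using bd_smul[of "zer C" 0] by simp

lemma bd_neg: "x \<in> car C \<Longrightarrow> bd C (neg x) = neg (bd C x)"
  unfolding neg_def by (rule bd_smul)

lemma bd_vsum:
  "finite S \<Longrightarrow> (\<And>x. x \<in> S \<Longrightarrow> f x \<in> car C) \<Longrightarrow> bd C (vsum f S) = vsum (\<lambda>x. bd C (f x)) S"
proof (induction S rule: finite_induct)
  case (insert a S)
  have "vsum f (insert a S) = add C (f a) (vsum f S)"
    by (rule vsum_insert) (use insert in auto)
  moreover have "vsum (\<lambda>x. bd C (f x)) (insert a S) = add C (bd C (f a)) (vsum (\<lambda>x. bd C (f x)) S)"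
    by (rule vsum_insert) (use insert in auto)
  moreover have "vsum f S \<in> car C"
    by (rule vsum_closed) (use insert in auto)
  ultimately show ?case
    using insert by (simp add: bd_add)
qed simp

lemma bd_lincomb:
  "finite S \<Longrightarrow> S \<subseteq> car C \<Longrightarrow> bd C (lincomb S c) = vsum (\<lambda>v. smul C (c v) (bd C v)) S"
  unfolding lincomb_def by (subst bd_vsum) (auto simp: bd_smul intro!: vsum_cong)

lemma bd_lincomb_image:
  assumes "finite S" "S \<subseteq> car C" "\<And>v. v \<in> S \<Longrightarrow> g (bd C v) = v"
  shows "bd C (lincomb S c) = lincomb (bd C ` S) (\<lambda>w. c (g w))"
proof -
  have "bd C ` S \<subseteq> car C"
    using assms(2) by auto
  then show ?thesis
    using bd_lincomb[OF assms(1,2)] vsum_smul_image[of S g "bd C" c] assms(3) by simp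
qed

lemma bd_lincomb_cycles:
  assumes "finite S" "S \<subseteq> car C" "\<And>v. v \<in> S \<Longrightarrow> bd C v = zer C"
  shows "bd C (lincomb S c) = zer C"
  using bd_lincomb[OF assms(1,2)] assms(3) by (simp add: vsum_zer)

lemma filt_eq_minf_iff: "x \<in> car C \<Longrightarrow> filt C x = -\<infinity> \<longleftrightarrow> x = zer C"
  using asc unfolding asc_complex_def by blast

lemma filt_zer [simp]: "filt C (zer C) = -\<infinity>"
  using filt_eq_minf_iff by simp

lemma filt_not_inf: "x \<in> car C \<Longrightarrow> filt C x \<noteq> \<infinity>"
  using asc unfolding asc_complex_def by blast

lemma filt_bd_le: "x \<in> car C \<Longrightarrow> filt C (bd C x) \<le> filt C x"
  using asc unfolding asc_complex_def by blast

lemma filt_vsumn_le: "(\<forall>i<m. f i \<in> car C) \<Longrightarrow>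
    filt C (vsumn C (\<lambda>i. smul C (c i) (f i)) m) \<le> Sup {filt C (f i) | i. i < m \<and> c i \<noteq> 0}"
  using asc unfolding asc_complex_def by blast

lemma filt_vsumn_deg: "inj_on d {..<m} \<Longrightarrow> (\<forall>i<m. f i \<in> deg C (d i)) \<Longrightarrow>
    filt C (vsumn C (\<lambda>i. smul C (c i) (f i)) m) = Sup {filt C (f i) | i. i < m \<and> c i \<noteq> 0}"
  using asc unfolding asc_complex_def by blast

lemma filtration_filt: "filtration (car C) (filt C)"
  unfolding filtration_def
proof (intro conjI ballI allI)
  show "filt C x = -\<infinity> \<longleftrightarrow> x = zer C" if "x \<in> car C" for x
    using filt_eq_minf_iff that .
  show "filt C (add C x y) \<le> max (filt C x) (filt C y)" if x: "x \<in> car C" and y: "y \<in> car C" for x y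
  proof -
    define f where "f i = (if i = (0::nat) then x else y)" for i
    have "vsumn C (\<lambda>i. smul C 1 (f i)) 2 = add C x y"
      using x y by (simp add: numeral_2_eq_2 f_def)
    moreover have "{filt C (f i) | i. i < 2 \<and> (1::'k) \<noteq> 0} = {filt C x, filt C y}"
      unfolding f_def by (auto simp: numeral_2_eq_2 less_Suc_eq)
    ultimately show ?thesis
      using filt_vsumn_le[of 2 f "\<lambda>_. 1"] x y by (simp add: f_def sup_max)
  qed
  show "filt C (smul C c x) \<le> filt C x" if x: "x \<in> car C" for c x
  proof -
    have "filt C (vsumn C (\<lambda>i. smul C c x) 1) \<le> Sup {filt C x | i. i < (1::nat) \<and> c \<noteq> 0}"
      using filt_vsumn_le[of 1 "\<lambda>_. x" "\<lambda>_. c"] x by simp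
    also have "\<dots> \<le> filt C x"
      by (rule Sup_least) auto
    finally show ?thesis
      using x by simp
  qed
qed

lemma filtration_filt_on: "U \<subseteq> car C \<Longrightarrow> filtration U (filt C)"
  using filtration_filt by (rule filtration_mono)

lemma deg_inter_eq_zer:
  assumes "x \<in> deg C n" "x \<in> deg C m" "n \<noteq> m"
  shows "x = zer C"
proof -
  define f where "f i = (if i = (0::nat) then x else neg x)" for i
  define d where "d i = (if i = (0::nat) then n else m)" for i
  have "inj_on d {..<2}"
    unfolding d_def inj_on_def using assms by (auto simp: numeral_2_eq_2 less_Suc_eq)
  moreover have "\<forall>i<2. f i \<in> deg C (d i)"
    unfolding f_def d_def using assms is_subspaceD(5)[OF deg_subspace] by auto
  moreover have "vsumn C f 2 = zer C"
    using assms deg_car by (simp add: numeral_2_eq_2 f_def)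
  ultimately have "f 0 = zer C"
    using graded_unique[of d 2 f 0] by simp
  then show ?thesis
    unfolding f_def by simp
qed

lemma vsumn_cong: "(\<And>i. i < m \<Longrightarrow> f i = g i) \<Longrightarrow> vsumn C f m = vsumn C g m"
  by (induction m) auto

lemma vsum_deg_eq_zer:
  assumes N: "finite N" and g: "\<And>m. m \<in> N \<Longrightarrow> g m \<in> deg C m" and zero: "vsum g N = zer C"
    and m: "m \<in> N"
  shows "g m = zer C"
proof -
  have "\<And>m. m \<in> N \<Longrightarrow> g m \<in> car C"
    using g deg_car by blast
  then obtain h where h: "bij_betw h {..<card N} N" "vsum g N = vsumn C (g \<circ> h) (card N)"
    using vsum_as_vsumn[OF N] by blast
  have "inj_on h {..<card N}" "\<forall>i<card N. (g \<circ> h) i \<in> deg C (h i)"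
    using h(1) g unfolding bij_betw_def by auto
  moreover obtain i where "i < card N" "m = h i"
    using h(1) m unfolding bij_betw_def by auto
  ultimately show ?thesis
    using graded_unique[of h "card N" "g \<circ> h" i] h(2) zero by simp
qed

lemma filt_vsum_deg:
  assumes N: "finite N" and g: "\<And>m. m \<in> N \<Longrightarrow> g m \<in> deg C m"
  shows "filt C (vsum g N) = Sup ((\<lambda>m. filt C (g m)) ` N)"
proof -
  have gC: "\<And>m. m \<in> N \<Longrightarrow> g m \<in> car C"
    using g deg_car by blast
  then obtain h where h: "bij_betw h {..<card N} N" "vsum g N = vsumn C (g \<circ> h) (card N)"
    using vsum_as_vsumn[OF N] by blast
  have hd: "inj_on h {..<card N}" "\<forall>i<card N. (g \<circ> h) i \<in> deg C (h i)"
    using h(1) g unfolding bij_betw_def by auto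
  have "h i \<in> N" if "i < card N" for i
    using h(1) that by (auto dest: bij_betwE)
  then have "vsumn C (g \<circ> h) (card N) = vsumn C (\<lambda>i. smul C 1 ((g \<circ> h) i)) (card N)"
    using gC by (intro vsumn_cong) simp
  then have "filt C (vsum g N) = Sup {filt C ((g \<circ> h) i) | i. i < card N \<and> (1::'k) \<noteq> 0}"
    using h(2) filt_vsumn_deg[OF hd] by simp
  also have "{filt C ((g \<circ> h) i) | i. i < card N \<and> (1::'k) \<noteq> 0} = (\<lambda>m. filt C (g m)) ` h ` {..<card N}"
    by auto
  also have "h ` {..<card N} = N"
    using h(1) unfolding bij_betw_def by simp
  finally show ?thesis .
qed

lemma vsum_deg_component:
  assumes N: "finite N" and g: "\<And>m. m \<in> N \<Longrightarrow> g m \<in> deg C m" and x: "vsum g N \<in> deg C n"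
    and m: "m \<in> N" "m \<noteq> n"
  shows "g m = zer C"
proof -
  define x where "x = vsum g N"
  define a where "a k = (if k = n then neg x else zer C)" for k
  define b where "b k = (if k \<in> N then g k else zer C)" for k
  have gC: "\<And>k. k \<in> N \<Longrightarrow> g k \<in> car C" and xC: "x \<in> car C"
    using g x deg_car unfolding x_def by blast+
  have aC: "a k \<in> car C" and bC: "b k \<in> car C" for k
    unfolding a_def b_def using gC xC by auto
  have "add C (a k) (b k) \<in> deg C k" for k
  proof -
    note D = is_subspaceD[OF deg_subspace[of k]]
    have "a k \<in> deg C k"
      unfolding a_def using x D unfolding x_def by auto
    moreover have "b k \<in> deg C k"
      unfolding b_def using g D by auto
    ultimately show ?thesis
      using D(3) by blast
  qed
  moreover have "vsum (\<lambda>k. add C (a k) (b k)) (insert n N) = zer C"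
  proof -
    have "vsum a (insert n N) = vsum a {n}"
      by (rule vsum_mono_neutral[symmetric]) (use N aC in \<open>auto simp: a_def\<close>)
    also have "\<dots> = neg x"
      using vsum_insert[of "{}" n a] aC xC by (simp add: a_def)
    finally have "vsum a (insert n N) = neg x" .
    moreover have "vsum b (insert n N) = vsum b N"
      by (rule vsum_mono_neutral[symmetric]) (use N bC in \<open>auto simp: b_def\<close>)
    moreover have "vsum b N = x"
      unfolding x_def by (rule vsum_cong) (use gC in \<open>auto simp: b_def\<close>)
    ultimately show ?thesis
      using vsum_add[of "insert n N" a b] aC bC xC by simp
  qed
  ultimately have "add C (a m) (b m) = zer C"
    using N m(1) by (intro vsum_deg_eq_zer[of "insert n N" "\<lambda>k. add C (a k) (b k)" m]) auto
  then show ?thesis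
    using m gC unfolding a_def b_def by simp
qed

definition hdeg :: "'v \<Rightarrow> int" where
  "hdeg x = (SOME n. x \<in> deg C n)"

lemma hdeg_eq: "x \<in> deg C n \<Longrightarrow> x \<noteq> zer C \<Longrightarrow> hdeg x = n"
proof -
  assume x: "x \<in> deg C n" "x \<noteq> zer C"
  from x(1) have "x \<in> deg C (hdeg x)"
    unfolding hdeg_def by (rule someI)
  then show ?thesis
    using deg_inter_eq_zer x by blast
qed

lemma orthogonal_Union_deg:
  assumes B: "\<And>n. B n \<subseteq> deg C n - {zer C}" "\<And>n. orthogonal (filt C) (B n)"
  shows "orthogonal (filt C) (\<Union>n. B n)"
  unfolding orthogonal_def
proof (intro allI impI)
  fix S and c :: "'v \<Rightarrow> 'k" assume S: "finite S" "S \<subseteq> (\<Union>n. B n)"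
  define Sn where "Sn n = {v\<in>S. hdeg v = n}" for n
  have Sn_B: "Sn n \<subseteq> B n" for n
  proof
    fix v assume v: "v \<in> Sn n"
    then obtain m where "v \<in> B m"
      using S unfolding Sn_def by blast
    moreover from this have "hdeg v = m"
      using B(1)[of m] hdeg_eq by blast
    ultimately show "v \<in> B n"
      using v unfolding Sn_def by simp
  qed
  have Sn_fin: "finite (Sn n)" for n
    using S(1) unfolding Sn_def by simp
  have Sn_orth: "filt C (lincomb (Sn n) c) = Sup (filt C ` {v\<in>Sn n. c v \<noteq> 0})" for n
    using orthogonalD[OF B(2) Sn_fin Sn_B] .
  have Sn_deg: "lincomb (Sn n) c \<in> deg C n" for n
    using Sn_B[of n] B(1)[of n] by (intro subspace_lincomb[OF deg_subspace]) blast
  have SC: "S \<subseteq> car C"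
    using S B(1) deg_car by blast
  have "filt C (lincomb S c) = filt C (vsum (\<lambda>n. lincomb (Sn n) c) (hdeg ` S))"
    using lincomb_partition[OF S(1) SC, of c hdeg] unfolding Sn_def by simp
  also have "\<dots> = Sup ((\<lambda>n. filt C (lincomb (Sn n) c)) ` hdeg ` S)"
    using S(1) Sn_deg by (intro filt_vsum_deg) auto
  also have "\<dots> = Sup ((\<lambda>n. Sup (filt C ` {v\<in>Sn n. c v \<noteq> 0})) ` hdeg ` S)"
    by (simp only: Sn_orth)
  also have "\<dots> = Sup (filt C ` (\<Union>n\<in>hdeg ` S. {v\<in>Sn n. c v \<noteq> 0}))"
    by (rule SUP_UNION[symmetric])
  also have "(\<Union>n\<in>hdeg ` S. {v\<in>Sn n. c v \<noteq> 0}) = {v\<in>S. c v \<noteq> 0}"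
    unfolding Sn_def by auto
  finally show "filt C (lincomb S c) = Sup (filt C ` {v\<in>S. c v \<noteq> 0})" .
qed

lemma car_subset_lin_span_Union_deg:
  assumes B: "\<And>n. deg C n \<subseteq> lin_span (B n)" "\<And>n. B n \<subseteq> car C"
  shows "car C \<subseteq> lin_span (\<Union>n. B n)"
proof
  fix x assume "x \<in> car C"
  then obtain m f d where fd: "\<forall>i<m. f i \<in> deg C (d i)" "x = vsumn C f m"
    using graded_decomp by blast
  have L: "is_subspace (lin_span (\<Union>n. B n))"
    using B(2) by (intro lin_span_subspace) blast
  have "f i \<in> lin_span (\<Union>n. B n)" if "i < m" for i
  proof -
    have "f i \<in> lin_span (B (d i))"
      using fd(1) that B(1) by blast
    moreover have "lin_span (B (d i)) \<subseteq> lin_span (\<Union>n. B n)"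
      by (rule lin_span_mono) blast
    ultimately show ?thesis
      by blast
  qed
  then have "vsum f {..<m} \<in> lin_span (\<Union>n. B n)"
    by (intro subspace_vsum[OF L]) auto
  moreover have "x = vsum f {..<m}"
    unfolding fd(2) using fd(1) deg_car by (intro vsumn_eq_vsum) blast
  ultimately show "x \<in> lin_span (\<Union>n. B n)"
    by simp
qed

subsection \<open>Cycles, boundaries and preimages of least level\<close>

definition deg_cycles :: "int \<Rightarrow> 'v set" where
  "deg_cycles n = {x \<in> deg C n. bd C x = zer C}"

definition deg_bounds :: "int \<Rightarrow> 'v set" where
  "deg_bounds n = bd C ` deg C (n + 1)"

lemma subspace_deg_cycles: "is_subspace (deg_cycles n)"
  unfolding is_subspace_def deg_cycles_def using is_subspaceD[OF deg_subspace[of n]] deg_car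
  by (auto simp: bd_add bd_smul)

lemma subspace_deg_bounds: "is_subspace (deg_bounds n)"
proof (rule is_subspaceI)
  note D = is_subspaceD[OF deg_subspace[of "n + 1"]]
  show "deg_bounds n \<subseteq> car C"
    unfolding deg_bounds_def using deg_car by auto
  show "zer C \<in> deg_bounds n"
    unfolding deg_bounds_def using D(2) bd_zer by (metis image_eqI)
  show "add C x y \<in> deg_bounds n" if xy: "x \<in> deg_bounds n" "y \<in> deg_bounds n" for x y
  proof -
    obtain a where "a \<in> deg C (n + 1)" "x = bd C a"
      using xy(1) unfolding deg_bounds_def by auto
    moreover obtain b where "b \<in> deg C (n + 1)" "y = bd C b"
      using xy(2) unfolding deg_bounds_def by auto
    ultimately show ?thesis
      unfolding deg_bounds_def using D deg_car bd_add by (intro image_eqI[of _ _ "add C a b"]) auto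
  qed
  show "smul C c x \<in> deg_bounds n" if x: "x \<in> deg_bounds n" for c x
  proof -
    obtain a where "a \<in> deg C (n + 1)" "x = bd C a"
      using x unfolding deg_bounds_def by auto
    then show ?thesis
      unfolding deg_bounds_def using D deg_car bd_smul by (intro image_eqI[of _ _ "smul C c a"]) auto
  qed
qed

lemma deg_bounds_subset_cycles: "deg_bounds n \<subseteq> deg_cycles n"
  unfolding deg_bounds_def deg_cycles_def using bd_deg deg_car by auto

lemma deg_cycles_subset_deg: "deg_cycles n \<subseteq> deg C n"
  unfolding deg_cycles_def by auto

lemma deg_cycles_subset_car: "deg_cycles n \<subseteq> car C"
  using deg_cycles_subset_deg deg_car by blast

text \<open>Preimages of least filtration level exist because the levels in each degree are well ordered.\<close>

definition min_preimage :: "int \<Rightarrow> 'v \<Rightarrow> 'v" where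
  "min_preimage n w = (SOME y. y \<in> deg C (n + 1) \<and> bd C y = w \<and>
     (\<forall>y'. y' \<in> deg C (n + 1) \<and> bd C y' = w \<longrightarrow> filt C y \<le> filt C y'))"

lemma min_preimage:
  assumes "w \<in> deg_bounds n"
  shows "min_preimage n w \<in> deg C (n + 1)" "bd C (min_preimage n w) = w"
    "\<And>y. y \<in> deg C (n + 1) \<Longrightarrow> bd C y = w \<Longrightarrow> filt C (min_preimage n w) \<le> filt C y"
proof -
  define Pre where "Pre = {y \<in> deg C (n + 1). bd C y = w}"
  have "\<exists>y\<in>Pre. \<forall>y'\<in>Pre. filt C y \<le> filt C y'"
  proof (cases "zer C \<in> Pre")
    case True
    then show ?thesis
      by (intro bexI[of _ "zer C"]) auto
  next
    case False
    then have "filt C ` Pre \<subseteq> filt C ` (deg C (n + 1) - {zer C})" "filt C ` Pre \<noteq> {}"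
      using assms unfolding Pre_def deg_bounds_def by auto
    then show ?thesis
      using well_ordered_setD[of "filt C ` (deg C (n + 1) - {zer C})" "filt C ` Pre"] well_ordered
      by auto
  qed
  then have "\<exists>y. y \<in> deg C (n + 1) \<and> bd C y = w \<and>
      (\<forall>y'. y' \<in> deg C (n + 1) \<and> bd C y' = w \<longrightarrow> filt C y \<le> filt C y')"
    unfolding Pre_def by auto
  from someI_ex[OF this] show "min_preimage n w \<in> deg C (n + 1)" "bd C (min_preimage n w) = w"
    "\<And>y. y \<in> deg C (n + 1) \<Longrightarrow> bd C y = w \<Longrightarrow> filt C (min_preimage n w) \<le> filt C y"
    unfolding min_preimage_def by blast+
qed

definition preimage_level :: "int \<Rightarrow> 'v \<Rightarrow> ereal" where
  "preimage_level n w = filt C (min_preimage n w)"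

lemma preimage_level_le: "y \<in> deg C (n + 1) \<Longrightarrow> preimage_level n (bd C y) \<le> filt C y"
  unfolding preimage_level_def using min_preimage(3)[of "bd C y" n] unfolding deg_bounds_def by auto

lemma filtration_preimage_level: "filtration (deg_bounds n) (preimage_level n)"
  unfolding filtration_def
proof (intro conjI ballI allI)
  note D = is_subspaceD[OF deg_subspace[of "n + 1"]]
  fix x assume x: "x \<in> deg_bounds n"
  show "preimage_level n x = -\<infinity> \<longleftrightarrow> x = zer C"
  proof
    assume "preimage_level n x = -\<infinity>"
    then have "min_preimage n x = zer C"
      unfolding preimage_level_def using filt_eq_minf_iff min_preimage(1)[OF x] deg_car by blast
    then show "x = zer C"
      using min_preimage(2)[OF x] by simp
  next
    assume "x = zer C"
    then have "filt C (min_preimage n x) \<le> filt C (zer C)"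
      using min_preimage(3)[OF x, of "zer C"] D(2) by simp
    then show "preimage_level n x = -\<infinity>"
      unfolding preimage_level_def by simp
  qed
next
  note D = is_subspaceD[OF deg_subspace[of "n + 1"]]
  fix x y assume x: "x \<in> deg_bounds n" and y: "y \<in> deg_bounds n"
  let ?z = "add C (min_preimage n x) (min_preimage n y)"
  have z: "?z \<in> deg C (n + 1)" "bd C ?z = add C x y"
    using min_preimage[OF x] min_preimage[OF y] D deg_car bd_add by auto
  have "preimage_level n (add C x y) \<le> filt C ?z"
    using preimage_level_le[OF z(1)] z(2) by simp
  also have "\<dots> \<le> max (preimage_level n x) (preimage_level n y)"
    unfolding preimage_level_def
    using filtration_add[OF is_subspace_car filtration_filt] min_preimage(1)[OF x] min_preimage(1)[OF y] deg_car
    by blast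
  finally show "preimage_level n (add C x y) \<le> max (preimage_level n x) (preimage_level n y)" .
next
  note D = is_subspaceD[OF deg_subspace[of "n + 1"]]
  fix c x assume x: "x \<in> deg_bounds n"
  let ?z = "smul C c (min_preimage n x)"
  have z: "?z \<in> deg C (n + 1)" "bd C ?z = smul C c x"
    using min_preimage[OF x] D deg_car bd_smul by auto
  have "preimage_level n (smul C c x) \<le> filt C ?z"
    using preimage_level_le[OF z(1)] z(2) by simp
  also have "\<dots> \<le> preimage_level n x"
    unfolding preimage_level_def
    using filtration_smul_le[OF is_subspace_car filtration_filt] min_preimage(1)[OF x] deg_car by blast
  finally show "preimage_level n (smul C c x) \<le> preimage_level n x" .
qed

lemma well_ordered_preimage_level: "well_ordered_set (preimage_level n ` (deg_bounds n - {zer C}))"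
proof -
  have "preimage_level n ` (deg_bounds n - {zer C}) \<subseteq> filt C ` (deg C (n + 1) - {zer C})"
  proof
    fix r assume "r \<in> preimage_level n ` (deg_bounds n - {zer C})"
    then obtain w where w: "w \<in> deg_bounds n" "w \<noteq> zer C" "r = preimage_level n w"
      by auto
    then have "min_preimage n w \<noteq> zer C"
      using min_preimage(2)[OF w(1)] by auto
    then show "r \<in> filt C ` (deg C (n + 1) - {zer C})"
      using min_preimage(1)[OF w(1)] w(3) unfolding preimage_level_def by auto
  qed
  then show ?thesis
    using well_ordered well_ordered_set_subset by blast
qed

subsection \<open>Orthogonal bases adapted to the differential\<close>

lemma min_preimage_bd:
  assumes "P \<subseteq> deg_bounds m" "v \<in> min_preimage m ` P"
  shows "min_preimage m (bd C v) = v" "bd C v \<in> P"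
proof -
  obtain p where "p \<in> P" "v = min_preimage m p"
    using assms(2) by blast
  moreover from this have "bd C v = p"
    using assms(1) min_preimage(2) by blast
  ultimately show "min_preimage m (bd C v) = v" "bd C v \<in> P"
    by simp_all
qed

lemma bd_lincomb_min_preimages:
  assumes "finite S" "S \<subseteq> min_preimage m ` P" "P \<subseteq> deg_bounds m"
  shows "bd C (lincomb S c) = lincomb (bd C ` S) (\<lambda>w. c (min_preimage m w))"
proof (rule bd_lincomb_image[OF assms(1)])
  show "S \<subseteq> car C"
    using assms(2,3) min_preimage(1) deg_car by blast
  show "min_preimage m (bd C v) = v" if "v \<in> S" for v
    using min_preimage_bd(1)[OF assms(3)] that assms(2) by blast
qed

lemma preimage_level_bd_lincomb:
  assumes P: "orthogonal (preimage_level m) P" "P \<subseteq> deg_bounds m"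
    and S: "finite S" "S \<subseteq> min_preimage m ` P"
  shows "preimage_level m (bd C (lincomb S c)) = Sup (filt C ` {v\<in>S. c v \<noteq> 0})"
proof -
  have inv: "min_preimage m (bd C v) = v" "bd C v \<in> P" if "v \<in> S" for v
    using min_preimage_bd[OF P(2) subsetD[OF S(2) that]] by simp_all
  have "preimage_level m (bd C (lincomb S c)) =
      Sup (preimage_level m ` {w\<in>bd C ` S. c (min_preimage m w) \<noteq> 0})"
    unfolding bd_lincomb_min_preimages[OF S P(2)] using inv S(1)
    by (intro orthogonalD[OF P(1)]) auto
  also have "{w\<in>bd C ` S. c (min_preimage m w) \<noteq> 0} = bd C ` {v\<in>S. c v \<noteq> 0}"
    by (auto simp: inv(1))
  also have "preimage_level m ` bd C ` {v\<in>S. c v \<noteq> 0} = filt C ` {v\<in>S. c v \<noteq> 0}"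
    unfolding image_image preimage_level_def using inv by (intro image_cong) auto
  finally show ?thesis .
qed

text \<open>The level of a chain is at least the preimage level of its boundary; this is what makes the
  least-level preimages of an orthogonal basis of the boundaries orthogonal to the cycles.\<close>

lemma preimage_part_level_le:
  assumes k: "k \<in> deg_cycles (m + 1)" and P: "P \<subseteq> deg_bounds m" "orthogonal (preimage_level m) P"
    and S: "finite S" "S \<subseteq> min_preimage m ` P"
  shows "Sup (filt C ` {v\<in>S. c v \<noteq> 0}) \<le> filt C (add C k (lincomb S c))"
proof -
  have u: "lincomb S c \<in> deg C (m + 1)"
    using S(2) P(1) min_preimage(1) by (intro subspace_lincomb[OF deg_subspace]) blast
  have kd: "k \<in> deg C (m + 1)" "bd C k = zer C"
    using k unfolding deg_cycles_def by auto
  have "Sup (filt C ` {v\<in>S. c v \<noteq> 0}) = preimage_level m (bd C (lincomb S c))"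
    using preimage_level_bd_lincomb[OF P(2,1) S] by simp
  also have "bd C (lincomb S c) = bd C (add C k (lincomb S c))"
    using kd u deg_car bd_add by simp
  also have "preimage_level m \<dots> \<le> filt C (add C k (lincomb S c))"
    using kd(1) u by (intro preimage_level_le is_subspaceD(3)[OF deg_subspace])
  finally show ?thesis .
qed

lemma orthogonal_cycles_and_min_preimages:
  assumes K: "K \<subseteq> deg_cycles (m + 1)" "orthogonal (filt C) K"
    and P: "P \<subseteq> deg_bounds m" "orthogonal (preimage_level m) P"
  shows "orthogonal (filt C) (K \<union> min_preimage m ` P)"
proof (rule orthogonalI[OF is_subspace_car filtration_filt])
  have Y: "min_preimage m ` P \<subseteq> car C"
    using P(1) min_preimage(1) deg_car by blast
  show "K \<union> min_preimage m ` P \<subseteq> car C"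
    using K(1) Y deg_cycles_subset_car by blast
  fix S and c :: "'v \<Rightarrow> 'k"
  assume S: "finite S" "S \<subseteq> K \<union> min_preimage m ` P" and nz: "\<And>v. v \<in> S \<Longrightarrow> c v \<noteq> 0"
  define S1 where "S1 = S \<inter> K"
  define S2 where "S2 = S - K"
  have S12: "finite S1" "finite S2" "S1 \<subseteq> K" "S2 \<subseteq> min_preimage m ` P" "S = S1 \<union> S2"
    "{v\<in>S1. c v \<noteq> 0} = S1" "{v\<in>S2. c v \<noteq> 0} = S2"
    using S nz unfolding S1_def S2_def by auto
  have k: "lincomb S1 c \<in> deg_cycles (m + 1)"
    using S12(3) K(1) subspace_lincomb[OF subspace_deg_cycles] by blast
  have kC: "lincomb S1 c \<in> car C"
    using k deg_cycles_subset_car by blast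
  have uC: "lincomb S2 c \<in> car C"
    using S12(4) Y by (intro lincomb_closed) blast
  have x: "lincomb S c = add C (lincomb S1 c) (lincomb S2 c)"
    unfolding S1_def S2_def using S K(1) Y deg_cycles_subset_car by (intro lincomb_split) blast+
  have fk: "filt C (lincomb S1 c) = Sup (filt C ` S1)"
    using orthogonalD[OF K(2) S12(1,3), of c] S12(6) by simp
  have fu: "filt C (lincomb S2 c) \<le> Sup (filt C ` S2)"
    using filtration_lincomb_le[OF is_subspace_car filtration_filt S12(2), of c] S12(4,7) Y by auto
  have ge2: "Sup (filt C ` S2) \<le> filt C (lincomb S c)"
    using preimage_part_level_le[OF k P S12(2,4), of c] S12(7) x by simp
  have ge1: "Sup (filt C ` S1) \<le> filt C (lincomb S c)"
  proof (cases "Sup (filt C ` S1) \<le> Sup (filt C ` S2)")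
    case False
    then have "filt C (lincomb S2 c) < filt C (lincomb S1 c)"
      using fu fk by simp
    then have "filt C (add C (lincomb S2 c) (lincomb S1 c)) = filt C (lincomb S1 c)"
      using filtration_add_less[OF is_subspace_car filtration_filt uC kC] by simp
    then show ?thesis
      using x add_comm[OF kC uC] fk by simp
  qed (use ge2 in simp)
  show "Sup (filt C ` S) \<le> filt C (lincomb S c)"
    using ge1 ge2 S12(5) by (simp add: image_Un Sup_union_distrib)
qed

lemma deg_subset_lin_span_cycles_and_min_preimages:
  assumes K: "deg_cycles (m + 1) \<subseteq> lin_span K" "K \<subseteq> car C"
    and P: "P \<subseteq> deg_bounds m" "deg_bounds m \<subseteq> lin_span P"
  shows "deg C (m + 1) \<subseteq> lin_span (K \<union> min_preimage m ` P)"
proof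
  note D = is_subspaceD[OF deg_subspace[of "m + 1"]]
  have Y: "min_preimage m ` P \<subseteq> deg C (m + 1)"
    using P(1) min_preimage(1) by blast
  have L: "is_subspace (lin_span (K \<union> min_preimage m ` P))"
    using K(2) Y deg_car by (intro lin_span_subspace) blast
  fix x assume x: "x \<in> deg C (m + 1)"
  then have "bd C x \<in> lin_span P"
    using P(2) unfolding deg_bounds_def by blast
  then obtain T d where T: "finite T" "T \<subseteq> P" "bd C x = lincomb T d"
    by (rule lin_spanE)
  define u where "u = lincomb (min_preimage m ` T) (\<lambda>y. d (bd C y))"
  have uD: "u \<in> deg C (m + 1)"
    unfolding u_def using T(2) Y by (intro subspace_lincomb[OF deg_subspace]) blast
  have "bd C u = lincomb (bd C ` min_preimage m ` T) (\<lambda>w. d (bd C (min_preimage m w)))"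
    unfolding u_def using T P(1) by (intro bd_lincomb_min_preimages) auto
  also have "bd C ` min_preimage m ` T = T"
    using T(2) P(1) min_preimage(2) by (force simp: image_image)
  also have "lincomb T (\<lambda>w. d (bd C (min_preimage m w))) = lincomb T d"
  proof (rule lincomb_cong)
    show "T \<subseteq> car C"
      using T(2) P(1) is_subspaceD(1)[OF subspace_deg_bounds] by blast
    show "d (bd C (min_preimage m w)) = d w" if "w \<in> T" for w
      using that T(2) P(1) min_preimage(2) by auto
  qed
  finally have bdu: "bd C u = bd C x"
    using T(3) by simp
  define k where "k = add C x (neg u)"
  have "k \<in> deg_cycles (m + 1)"
    unfolding k_def deg_cycles_def using x uD D bdu deg_car by (simp add: bd_add bd_neg)
  then have "k \<in> lin_span (K \<union> min_preimage m ` P)"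
    using K(1) lin_span_mono[of K "K \<union> min_preimage m ` P"] by blast
  moreover have "u \<in> lin_span (K \<union> min_preimage m ` P)"
    unfolding u_def using T by (intro lin_spanI) auto
  moreover have "x = add C k u"
    unfolding k_def using x uD deg_car by (simp add: add_assoc)
  ultimately show "x \<in> lin_span (K \<union> min_preimage m ` P)"
    using is_subspaceD(3)[OF L] by simp
qed

end

context wo_asc_complex
begin

definition adapted_bases :: "int \<Rightarrow> 'v set \<Rightarrow> 'v set \<Rightarrow> bool" where
  "adapted_bases n P Z \<longleftrightarrow> orthogonal_basis (preimage_level n) (deg_bounds n) P \<and>
     Z \<subseteq> deg_cycles n - deg_bounds n \<and> orthogonal_basis (filt C) (deg_cycles n) (P \<union> Z)"

lemma ex_adapted_bases: "\<exists>P Z. adapted_bases n P Z"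
proof -
  have fB: "filtration (deg_bounds n) (filt C)" and fK: "filtration (deg_cycles n) (filt C)"
    using deg_bounds_subset_cycles deg_cycles_subset_car by (blast intro: filtration_filt_on)+
  have wB: "well_ordered_set (filt C ` (deg_bounds n - {zer C}))"
    and wK: "well_ordered_set (filt C ` (deg_cycles n - {zer C}))"
    using well_ordered deg_bounds_subset_cycles deg_cycles_subset_deg
    by (blast intro: well_ordered_set_subset)+
  obtain P where P: "orthogonal_basis (preimage_level n) (deg_bounds n) P" "orthogonal (filt C) P"
    using ex_bi_orthogonal_basis[OF subspace_deg_bounds filtration_preimage_level fB
        well_ordered_preimage_level wB] by blast
  obtain Q where Q: "orthogonal_basis (filt C) (deg_cycles n) Q"
      "orthogonal (indicator_filtration (deg_bounds n)) Q"
    using ex_bi_orthogonal_basis[OF subspace_deg_cycles fK filtration_indicator[OF subspace_deg_bounds]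
        wK well_ordered_indicator] by blast
  have "deg_bounds n \<subseteq> lin_span (Q \<inter> deg_bounds n)"
    using Q deg_bounds_subset_cycles deg_cycles_subset_car unfolding orthogonal_basis_def
    by (intro lin_span_restrict_if_orthogonal_indicator) blast+
  moreover have "orthogonal_basis (filt C) (deg_bounds n) P"
    using P unfolding orthogonal_basis_def by blast
  ultimately have "orthogonal_basis (filt C) (deg_cycles n) (P \<union> (Q - deg_bounds n))"
    using Q(1) by (intro orthogonal_basis_exchange[OF subspace_deg_cycles subspace_deg_bounds
          deg_bounds_subset_cycles])
  moreover have "Q - deg_bounds n \<subseteq> deg_cycles n - deg_bounds n"
    using Q(1) unfolding orthogonal_basis_def by blast
  ultimately show ?thesis
    using P(1) unfolding adapted_bases_def by blast
qed

text \<open>\<open>hom_basis n\<close> completes the basis \<open>bnd_basis n\<close> of the boundaries to a basis of the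
  cycles, so its classes form a basis of the homology in degree \<open>n\<close>.\<close>

definition bnd_basis :: "int \<Rightarrow> 'v set" where
  "bnd_basis n = fst (SOME PZ. adapted_bases n (fst PZ) (snd PZ))"

definition hom_basis :: "int \<Rightarrow> 'v set" where
  "hom_basis n = snd (SOME PZ. adapted_bases n (fst PZ) (snd PZ))"

lemma adapted_bases_chosen: "adapted_bases n (bnd_basis n) (hom_basis n)"
proof -
  have "\<exists>PZ. adapted_bases n (fst PZ) (snd PZ)"
    using ex_adapted_bases[of n] by auto
  then show ?thesis
    unfolding bnd_basis_def hom_basis_def by (rule someI_ex)
qed

lemma bnd_basis: "orthogonal_basis (preimage_level n) (deg_bounds n) (bnd_basis n)"
  and hom_basis: "hom_basis n \<subseteq> deg_cycles n - deg_bounds n"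
  and cycles_basis: "orthogonal_basis (filt C) (deg_cycles n) (bnd_basis n \<union> hom_basis n)"
  using adapted_bases_chosen[of n] unfolding adapted_bases_def by blast+

lemma bnd_basis_subset: "bnd_basis n \<subseteq> deg_bounds n - {zer C}"
  using bnd_basis unfolding orthogonal_basis_def by blast

definition deg_basis :: "int \<Rightarrow> 'v set" where
  "deg_basis n = bnd_basis n \<union> hom_basis n \<union> min_preimage (n - 1) ` bnd_basis (n - 1)"

lemma min_preimage_bnd_basis:
  assumes "p \<in> bnd_basis m"
  shows "min_preimage m p \<in> deg C (m + 1)" "bd C (min_preimage m p) = p" "p \<noteq> zer C"
  using assms bnd_basis_subset min_preimage(1,2) by blast+

lemma orthogonal_basis_deg_basis: "orthogonal_basis (filt C) (deg C n) (deg_basis n)"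
proof -
  have n: "n - 1 + 1 = n"
    by simp
  note K = cycles_basis[of n, unfolded orthogonal_basis_def]
  note P = bnd_basis[of "n - 1", unfolded orthogonal_basis_def]
  have PB: "bnd_basis (n - 1) \<subseteq> deg_bounds (n - 1)"
    using P by blast
  have KC: "bnd_basis n \<union> hom_basis n \<subseteq> deg_cycles n"
    using K by blast
  then have KCar: "bnd_basis n \<union> hom_basis n \<subseteq> car C"
    using deg_cycles_subset_car by blast
  have "orthogonal (filt C) (deg_basis n)"
    unfolding deg_basis_def
    using orthogonal_cycles_and_min_preimages[of "bnd_basis n \<union> hom_basis n" "n - 1" "bnd_basis (n - 1)"]
      KC K P PB by (simp add: n)
  moreover have "deg C n \<subseteq> lin_span (deg_basis n)"
    unfolding deg_basis_def
    using deg_subset_lin_span_cycles_and_min_preimages[of "n - 1" "bnd_basis n \<union> hom_basis n" "bnd_basis (n - 1)"]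
      KCar K P PB by (simp add: n)
  moreover have "deg_basis n \<subseteq> deg C n - {zer C}"
  proof -
    have "min_preimage (n - 1) ` bnd_basis (n - 1) \<subseteq> deg C n - {zer C}"
      using min_preimage_bnd_basis[of _ "n - 1"] n by fastforce
    then show ?thesis
      unfolding deg_basis_def using K deg_cycles_subset_deg by blast
  qed
  ultimately show ?thesis
    unfolding orthogonal_basis_def by blast
qed

definition svd_I :: "'v set" where
  "svd_I = (\<Union>m. min_preimage m ` bnd_basis m)"

definition svd_J :: "'v set" where
  "svd_J = (\<Union>n. hom_basis n)"

lemma bd_svd_I: "bd C ` svd_I = (\<Union>m. bnd_basis m)"
  unfolding svd_I_def using min_preimage_bnd_basis(2) by (auto simp: image_UN image_image)

lemma Union_deg_basis: "(\<Union>n. deg_basis n) = bd C ` svd_I \<union> svd_I \<union> svd_J"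
proof -
  have "(\<Union>n. min_preimage (n - 1) ` bnd_basis (n - 1)) = svd_I"
    unfolding svd_I_def
  proof (intro equalityI subsetI)
    fix y assume "y \<in> (\<Union>m. min_preimage m ` bnd_basis m)"
    then obtain m where "y \<in> min_preimage m ` bnd_basis m"
      by blast
    then show "y \<in> (\<Union>n. min_preimage (n - 1) ` bnd_basis (n - 1))"
      by (intro UN_I[of "m + 1"]) auto
  qed auto
  then show ?thesis
    unfolding deg_basis_def bd_svd_I svd_J_def by blast
qed

lemma orthogonal_basis_svd: "orthogonal_basis (filt C) (car C) (bd C ` svd_I \<union> svd_I \<union> svd_J)"
proof -
  note B = orthogonal_basis_deg_basis[unfolded orthogonal_basis_def]
  have "orthogonal (filt C) (\<Union>n. deg_basis n)"
    using B by (intro orthogonal_Union_deg) blast+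
  moreover have "car C \<subseteq> lin_span (\<Union>n. deg_basis n)"
    using B deg_car by (intro car_subset_lin_span_Union_deg) blast+
  moreover have "(\<Union>n. deg_basis n) \<subseteq> car C - {zer C}"
    using B deg_car by blast
  ultimately show ?thesis
    unfolding orthogonal_basis_def Union_deg_basis by blast
qed

lemma svd_basis_homogeneous: "b \<in> bd C ` svd_I \<union> svd_I \<union> svd_J \<Longrightarrow> \<exists>n. b \<in> deg C n"
  using orthogonal_basis_deg_basis unfolding Union_deg_basis[symmetric] orthogonal_basis_def by blast

lemma bnd_basis_deg: "bnd_basis m \<subseteq> deg C m - {zer C}"
  using bnd_basis_subset deg_bounds_subset_cycles deg_cycles_subset_deg by blast

lemma inj_on_bd_svd_I: "inj_on (bd C) svd_I"
proof (rule inj_onI)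
  fix y1 y2 assume y: "y1 \<in> svd_I" "y2 \<in> svd_I" "bd C y1 = bd C y2"
  obtain m1 p1 where 1: "p1 \<in> bnd_basis m1" "y1 = min_preimage m1 p1"
    using y(1) unfolding svd_I_def by auto
  obtain m2 p2 where 2: "p2 \<in> bnd_basis m2" "y2 = min_preimage m2 p2"
    using y(2) unfolding svd_I_def by auto
  have "p1 = p2"
    using y(3) 1 2 min_preimage_bnd_basis(2) by metis
  then have "m1 = m2"
    using 1 2 bnd_basis_deg deg_inter_eq_zer by blast
  then show "y1 = y2"
    using 1 2 \<open>p1 = p2\<close> by simp
qed

lemma bd_svd_J: "j \<in> svd_J \<Longrightarrow> bd C j = zer C"
  using hom_basis unfolding svd_J_def deg_cycles_def by blast

lemma bd_svd_I_disjoint_svd_J: "bd C ` svd_I \<inter> svd_J = {}"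
proof -
  have "p \<notin> hom_basis n" if "p \<in> bnd_basis m" for p m n
  proof
    assume p: "p \<in> hom_basis n"
    then have "p \<in> deg C n"
      using hom_basis deg_cycles_subset_deg by blast
    then have "m = n"
      using that bnd_basis_deg deg_inter_eq_zer by blast
    then show False
      using that p hom_basis bnd_basis_subset by blast
  qed
  then show ?thesis
    unfolding bd_svd_I svd_J_def by blast
qed

end

text \<open>A singular value decomposition: each \<open>i \<in> I\<close> spans together with \<open>\<partial>i\<close> a copy of
  \<open>Efin\<close>, each \<open>j \<in> J\<close> a copy of \<open>Einf\<close>, and orthogonality makes the filtration function
  the maximum over these blocks.\<close>

locale svd_basis = wo_asc_complex C for C :: "('k::field, 'v) acc" +
  fixes I J :: "'v set"
  assumes basis: "orthogonal_basis (filt C) (car C) (bd C ` I \<union> I \<union> J)"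
    and inj_on_bd: "inj_on (bd C) I"
    and bd_J [simp]: "\<And>j. j \<in> J \<Longrightarrow> bd C j = zer C"
    and bd_I_disjoint_J: "bd C ` I \<inter> J = {}"
    and homogeneous: "\<And>b. b \<in> bd C ` I \<union> I \<union> J \<Longrightarrow> \<exists>n. b \<in> deg C n"
begin

definition base :: "'v set" where
  "base = bd C ` I \<union> I \<union> J"

lemma base_car: "base \<subseteq> car C"
  using basis unfolding base_def orthogonal_basis_def by blast

lemma base_nonzero: "b \<in> base \<Longrightarrow> b \<noteq> zer C"
  using basis unfolding base_def orthogonal_basis_def by blast

lemma base_filt: "b \<in> base \<Longrightarrow> filt C b \<noteq> -\<infinity>"
  using base_nonzero base_car filt_eq_minf_iff by blast

lemma base_hdeg: "b \<in> base \<Longrightarrow> b \<in> deg C (hdeg b)"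
  using homogeneous hdeg_eq base_nonzero unfolding base_def by metis

lemma orthogonal_base: "orthogonal (filt C) base"
  using basis unfolding base_def orthogonal_basis_def by blast

lemma I_subset_base: "I \<subseteq> base" and bd_I_subset_base: "bd C ` I \<subseteq> base" and J_subset_base: "J \<subseteq> base"
  unfolding base_def by auto

lemma bd_I_nonzero: "y \<in> I \<Longrightarrow> bd C y \<noteq> zer C"
  using base_nonzero bd_I_subset_base by blast

lemma bd_bd_I [simp]: "y \<in> I \<Longrightarrow> bd C (bd C y) = zer C"
  using I_subset_base base_car by auto

lemma I_disjoint_J: "I \<inter> J = {}"
  using bd_I_nonzero bd_J by blast

lemma I_disjoint_bd_I: "I \<inter> bd C ` I = {}"
  using bd_I_nonzero bd_bd_I by fastforce

lemma inv_bd: "y \<in> I \<Longrightarrow> inv_into I (bd C) (bd C y) = y"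
  using inj_on_bd by (rule inv_into_f_f)

subsection \<open>Coordinates\<close>

definition is_coords :: "'v \<Rightarrow> ('v \<Rightarrow> 'k) \<Rightarrow> bool" where
  "is_coords x c \<longleftrightarrow> finite {b. c b \<noteq> 0} \<and> {b. c b \<noteq> 0} \<subseteq> base \<and> x = lincomb {b. c b \<noteq> 0} c"

definition coord :: "'v \<Rightarrow> 'v \<Rightarrow> 'k" where
  "coord x = (SOME c. is_coords x c)"

lemma is_coords_lincomb:
  assumes "finite S" "S \<subseteq> base"
  shows "is_coords (lincomb S c) (\<lambda>b. if b \<in> S then c b else 0)"
proof -
  have "{b. (if b \<in> S then c b else 0) \<noteq> 0} = {b\<in>S. c b \<noteq> 0}"
    by auto
  moreover have "lincomb S c = lincomb {b\<in>S. c b \<noteq> 0} c"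
    using lincomb_support[OF assms(1)] assms base_car by blast
  moreover have "\<dots> = lincomb {b\<in>S. c b \<noteq> 0} (\<lambda>b. if b \<in> S then c b else 0)"
    using assms base_car by (intro lincomb_cong) auto
  ultimately show ?thesis
    unfolding is_coords_def using assms by auto
qed

lemma is_coords_unique:
  assumes c: "is_coords x c" and d: "is_coords x d"
  shows "c = d"
proof
  define S where "S = {b. c b \<noteq> 0} \<union> {b. d b \<noteq> 0}"
  have S: "finite S" "S \<subseteq> base" "S \<subseteq> car C"
    using c d base_car unfolding is_coords_def S_def by auto
  have "lincomb {b. c b \<noteq> 0} c = lincomb S c"
    by (rule lincomb_mono_neutral) (use S in \<open>auto simp: S_def\<close>)
  moreover have "lincomb {b. d b \<noteq> 0} d = lincomb S d"
    by (rule lincomb_mono_neutral) (use S in \<open>auto simp: S_def\<close>)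
  ultimately have "lincomb S c = lincomb S d"
    using c d unfolding is_coords_def by simp
  then have "add C (lincomb S c) (neg (lincomb S d)) = zer C"
    using S by simp
  then have "lincomb S (\<lambda>v. c v - d v) = zer C"
    using S by (simp add: lincomb_neg lincomb_add)
  then have diff: "c v - d v = 0" if "v \<in> S" for v
    using orthogonal_indep[OF orthogonal_base base_filt filt_zer S(1,2)] that by blast
  fix v show "c v = d v"
  proof (cases "v \<in> S")
    case True
    then show ?thesis
      using diff by simp
  qed (simp add: S_def)
qed

lemma is_coords_coord: "x \<in> car C \<Longrightarrow> is_coords x (coord x)"
proof -
  assume "x \<in> car C"
  then obtain S c where "finite S" "S \<subseteq> base" "x = lincomb S c"
    using basis unfolding base_def orthogonal_basis_def by (blast elim: lin_spanE)
  then have "\<exists>c. is_coords x c"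
    using is_coords_lincomb by blast
  then show ?thesis
    unfolding coord_def by (rule someI_ex)
qed

lemma coord_eq: "x \<in> car C \<Longrightarrow> is_coords x c \<Longrightarrow> coord x = c"
  using is_coords_coord is_coords_unique by blast

lemma coord_lincomb:
  assumes "finite S" "S \<subseteq> base"
  shows "coord (lincomb S c) = (\<lambda>b. if b \<in> S then c b else 0)"
  using coord_eq[OF _ is_coords_lincomb[OF assms]] assms base_car by auto

lemma coord_finite: "x \<in> car C \<Longrightarrow> finite {b. coord x b \<noteq> 0}"
  using is_coords_coord unfolding is_coords_def by blast

lemma coord_base: "x \<in> car C \<Longrightarrow> coord x b \<noteq> 0 \<Longrightarrow> b \<in> base"
  using is_coords_coord unfolding is_coords_def by blast

lemma lincomb_coord: "x \<in> car C \<Longrightarrow> x = lincomb {b. coord x b \<noteq> 0} (coord x)"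
  using is_coords_coord unfolding is_coords_def by blast

lemma coord_add:
  assumes x: "x \<in> car C" and y: "y \<in> car C"
  shows "coord (add C x y) = (\<lambda>b. coord x b + coord y b)"
proof -
  define Sx where "Sx = {b. coord x b \<noteq> 0}"
  define Sy where "Sy = {b. coord y b \<noteq> 0}"
  have S: "finite Sx" "finite Sy" "Sx \<union> Sy \<subseteq> base"
    using x y coord_finite coord_base unfolding Sx_def Sy_def by auto
  have "add C x y = add C (lincomb Sx (coord x)) (lincomb Sy (coord y))"
    using lincomb_coord[OF x] lincomb_coord[OF y] unfolding Sx_def Sy_def by simp
  also have "\<dots> = lincomb (Sx \<union> Sy)
      (\<lambda>v. (if v \<in> Sx then coord x v else 0) + (if v \<in> Sy then coord y v else 0))"
    using S base_car by (intro lincomb_add_Un) auto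
  finally have "coord (add C x y) =
      (\<lambda>b. if b \<in> Sx \<union> Sy then (if b \<in> Sx then coord x b else 0) + (if b \<in> Sy then coord y b else 0) else 0)"
    using coord_lincomb[OF _ S(3)] S(1,2) by simp
  then show ?thesis
    unfolding Sx_def Sy_def by (auto simp: fun_eq_iff)
qed

lemma coord_smul:
  assumes x: "x \<in> car C"
  shows "coord (smul C a x) = (\<lambda>b. a * coord x b)"
proof -
  define Sx where "Sx = {b. coord x b \<noteq> 0}"
  have S: "finite Sx" "Sx \<subseteq> base"
    using x coord_finite coord_base unfolding Sx_def by auto
  have "smul C a x = smul C a (lincomb Sx (coord x))"
    using lincomb_coord[OF x] unfolding Sx_def by simp
  also have "\<dots> = lincomb Sx (\<lambda>v. a * coord x v)"
    using S base_car by (intro lincomb_smul) auto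
  finally have "coord (smul C a x) = (\<lambda>b. if b \<in> Sx then a * coord x b else 0)"
    using coord_lincomb[OF S] by simp
  then show ?thesis
    unfolding Sx_def by (auto simp: fun_eq_iff)
qed

lemma coord_zer: "coord (zer C) = (\<lambda>_. 0)"
  using coord_lincomb[of "{}"] by simp

lemma coord_neg: "x \<in> car C \<Longrightarrow> coord (neg x) = (\<lambda>b. - coord x b)"
  unfolding neg_def by (simp add: coord_smul)

lemma filt_coord:
  assumes x: "x \<in> car C"
  shows "filt C x = Sup (filt C ` {b. coord x b \<noteq> 0})"
proof -
  have S: "finite {b. coord x b \<noteq> 0}" "{b. coord x b \<noteq> 0} \<subseteq> base"
    using x coord_finite coord_base by auto
  have "filt C x = filt C (lincomb {b. coord x b \<noteq> 0} (coord x))"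
    using lincomb_coord[OF x] by simp
  also have "\<dots> = Sup (filt C ` {v\<in>{b. coord x b \<noteq> 0}. coord x v \<noteq> 0})"
    by (rule orthogonalD[OF orthogonal_base S])
  finally show ?thesis
    by simp
qed

lemma bd_lincomb_base:
  assumes "finite S" "S \<subseteq> base"
  shows "bd C (lincomb S c) = lincomb (bd C ` (S \<inter> I)) (\<lambda>w. c (inv_into I (bd C) w))"
proof -
  have SC: "S \<subseteq> car C"
    using assms base_car by blast
  have "bd C (lincomb (S - I) c) = zer C"
    using assms SC unfolding base_def by (intro bd_lincomb_cycles) auto
  moreover have "bd C (lincomb (S \<inter> I) c) = lincomb (bd C ` (S \<inter> I)) (\<lambda>w. c (inv_into I (bd C) w))"
    using assms SC inv_bd by (intro bd_lincomb_image) auto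
  moreover have "lincomb (bd C ` (S \<inter> I)) (\<lambda>w. c (inv_into I (bd C) w)) \<in> car C"
    using SC by (intro lincomb_closed) auto
  ultimately show ?thesis
    using lincomb_split[OF assms(1) SC, of c I] SC bd_add by (simp add: subset_iff)
qed

lemma
  assumes x: "x \<in> car C"
  shows coord_bd_bd: "y \<in> I \<Longrightarrow> coord (bd C x) (bd C y) = coord x y"
    and coord_bd_zero: "b \<notin> bd C ` I \<Longrightarrow> coord (bd C x) b = 0"
proof -
  define S where "S = {b. coord x b \<noteq> 0}"
  have S: "finite S" "S \<subseteq> base" "bd C ` (S \<inter> I) \<subseteq> base"
    using x coord_finite coord_base bd_I_subset_base unfolding S_def by auto
  have "bd C x = bd C (lincomb S (coord x))"
    using lincomb_coord[OF x] unfolding S_def by simp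
  also have "\<dots> = lincomb (bd C ` (S \<inter> I)) (\<lambda>w. coord x (inv_into I (bd C) w))"
    by (rule bd_lincomb_base[OF S(1,2)])
  finally have cb: "coord (bd C x) = (\<lambda>b. if b \<in> bd C ` (S \<inter> I) then coord x (inv_into I (bd C) b) else 0)"
    using coord_lincomb[OF _ S(3)] S(1) by simp
  show "coord (bd C x) (bd C y) = coord x y" if y: "y \<in> I"
  proof (cases "y \<in> S")
    case False
    then have "bd C y \<notin> bd C ` (S \<inter> I)"
      using inj_on_bd y by (auto dest: inj_onD)
    then show ?thesis
      using cb False unfolding S_def by simp
  qed (use cb y inv_bd in auto)
  show "coord (bd C x) b = 0" if "b \<notin> bd C ` I"
    using cb that by auto
qed

lemma coord_deg:
  assumes x: "x \<in> deg C n" and b: "coord x b \<noteq> 0"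
  shows "b \<in> deg C n"
proof (rule ccontr)
  assume b_out: "b \<notin> deg C n"
  have xC: "x \<in> car C"
    using x by (rule deg_car)
  define S where "S = {b. coord x b \<noteq> 0}"
  define Sm where "Sm m = {v\<in>S. hdeg v = m}" for m
  have S: "finite S" "S \<subseteq> base" "S \<subseteq> car C" "b \<in> S"
    using xC b coord_finite coord_base base_car unfolding S_def by auto
  have Sm: "finite (Sm m)" "Sm m \<subseteq> base" "Sm m \<subseteq> deg C m" for m
    using S base_hdeg unfolding Sm_def by auto
  have Sm_deg: "lincomb (Sm m) (coord x) \<in> deg C m" for m
    using Sm(3) subspace_lincomb[OF deg_subspace] by blast
  have "x = vsum (\<lambda>m. lincomb (Sm m) (coord x)) (hdeg ` S)"
    using lincomb_coord[OF xC] lincomb_partition[OF S(1,3), of "coord x" hdeg] unfolding S_def Sm_def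
    by simp
  then have "lincomb (Sm (hdeg b)) (coord x) = zer C"
    using x S b_out base_hdeg Sm_deg by (intro vsum_deg_component[of "hdeg ` S" _ n]) auto
  then have "coord x b = 0"
    using orthogonal_indep[OF orthogonal_base base_filt filt_zer Sm(1,2)] S(4) unfolding Sm_def by blast
  then show False
    using b by simp
qed

end

lemma acc_isoI:
  fixes A :: "('k::field, 'a) acc" and B :: "('k, 'b) acc"
  assumes f: "acc_mor A B f"
    and A: "\<forall>x\<in>car A. \<forall>y\<in>car A. add A x y \<in> car A" "\<forall>c. \<forall>x\<in>car A. smul A c x \<in> car A"
      "\<forall>x\<in>car A. bd A x \<in> car A"
    and g: "\<forall>y\<in>car B. g y \<in> car A" "\<forall>x\<in>car A. g (f x) = x" "\<forall>y\<in>car B. f (g y) = y"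
      "\<forall>n. g ` deg B n \<subseteq> deg A n"
    and filt_eq: "\<forall>x\<in>car A. filt B (f x) = filt A x"
  shows "acc_iso A B"
proof -
  note f' = f[unfolded acc_mor_def]
  have "acc_mor B A g"
    unfolding acc_mor_def
  proof (intro conjI ballI allI)
    fix y1 y2 assume y: "y1 \<in> car B" "y2 \<in> car B"
    have "add B y1 y2 = f (add A (g y1) (g y2))"
      using f' y g by simp
    then show "g (add B y1 y2) = add A (g y1) (g y2)"
      using g A y by simp
  next
    fix c y assume y: "y \<in> car B"
    have "smul B c y = f (smul A c (g y))"
      using f' y g by metis
    then show "g (smul B c y) = smul A c (g y)"
      using g A y by simp
  next
    fix y assume y: "y \<in> car B"
    have "bd B y = f (bd A (g y))"
      using f' y g by metis
    then show "g (bd B y) = bd A (g y)"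
      using g A y by simp
    show "filt A (g y) \<le> filt B y"
      using filt_eq g y by (metis order_refl)
  qed (use g in blast)+
  then show ?thesis
    unfolding acc_iso_def using f g by blast
qed

lemma acc_iso_sym: "acc_iso A B \<Longrightarrow> acc_iso B A"
  unfolding acc_iso_def by blast

lemma dsumF_simps:
  "car (dsumF I E) = {x. (\<forall>i\<in>I. x i \<in> car (E i)) \<and> (\<forall>i. i \<notin> I \<longrightarrow> x i = zer (E i))
              \<and> finite {i. x i \<noteq> zer (E i)}}"
  "add (dsumF I E) = (\<lambda>x y i. add (E i) (x i) (y i))"
  "zer (dsumF I E) = (\<lambda>i. zer (E i))"
  "smul (dsumF I E) = (\<lambda>c x i. smul (E i) c (x i))"
  "deg (dsumF I E) = (\<lambda>n. {x. (\<forall>i\<in>I. x i \<in> deg (E i) n) \<and> (\<forall>i. i \<notin> I \<longrightarrow> x i = zer (E i))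
              \<and> finite {i. x i \<noteq> zer (E i)}})"
  "bd (dsumF I E) = (\<lambda>x i. if i \<in> I then bd (E i) (x i) else zer (E i))"
  "filt (dsumF I E) = (\<lambda>x. Sup {filt (E i) (x i) | i. i \<in> I})"
  unfolding dsumF_def by simp_all

lemma dsum2_simps:
  "car (dsum2 A B) = car A \<times> car B"
  "add (dsum2 A B) = (\<lambda>(x, y) (u, v). (add A x u, add B y v))"
  "zer (dsum2 A B) = (zer A, zer B)"
  "smul (dsum2 A B) = (\<lambda>c (x, y). (smul A c x, smul B c y))"
  "deg (dsum2 A B) = (\<lambda>n. deg A n \<times> deg B n)"
  "bd (dsum2 A B) = (\<lambda>(x, y). (bd A x, bd B y))"
  "filt (dsum2 A B) = (\<lambda>(x, y). max (filt A x) (filt B y))"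
  unfolding dsum2_def by simp_all

lemma Efin_simps:
  "car (Efin k a b) = UNIV"
  "add (Efin k a b) = (\<lambda>(x, y) (u, v). (x + u, y + v))"
  "zer (Efin k a b) = (0, 0)"
  "smul (Efin k a b) = (\<lambda>c (x, y). (c * x, c * y))"
  "deg (Efin k a b) = (\<lambda>n. if n = k then {(x, 0) | x. True}
                 else if n = k + 1 then {(0, y) | y. True} else {(0, 0)})"
  "bd (Efin k a b) = (\<lambda>(x, y). (y, 0))"
  "filt (Efin k a b) = (\<lambda>(x, y). if y \<noteq> 0 then ereal b else if x \<noteq> 0 then ereal a else -\<infinity>)"
  unfolding Efin_def by simp_all

lemma Einf_simps:
  "car (Einf l c) = UNIV" "add (Einf l c) = (+)" "zer (Einf l c) = 0" "smul (Einf l c) = (*)"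
  "deg (Einf l c) = (\<lambda>n. if n = l then UNIV else {0})"
  "bd (Einf l c) = (\<lambda>_. 0)"
  "filt (Einf l c) = (\<lambda>x. if x = 0 then -\<infinity> else ereal c)"
  unfolding Einf_def by simp_all

context svd_basis
begin

definition fin_deg :: "'v \<Rightarrow> int" where
  "fin_deg y = hdeg (bd C y)"

definition fin_lo :: "'v \<Rightarrow> real" where
  "fin_lo y = real_of_ereal (filt C (bd C y))"

definition fin_hi :: "'v \<Rightarrow> real" where
  "fin_hi y = real_of_ereal (filt C y)"

definition inf_deg :: "'v \<Rightarrow> int" where
  "inf_deg j = hdeg j"

definition inf_lev :: "'v \<Rightarrow> real" where
  "inf_lev j = real_of_ereal (filt C j)"

definition fin_part :: "('k, 'v \<Rightarrow> 'k \<times> 'k) acc" where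
  "fin_part = dsumF I (\<lambda>i. Efin (fin_deg i) (fin_lo i) (fin_hi i))"

definition inf_part :: "('k, 'v \<Rightarrow> 'k) acc" where
  "inf_part = dsumF J (\<lambda>j. Einf (inf_deg j) (inf_lev j))"

definition blocks :: "('k, ('v \<Rightarrow> 'k \<times> 'k) \<times> ('v \<Rightarrow> 'k)) acc" where
  "blocks = dsum2 fin_part inf_part"

definition to_blocks :: "'v \<Rightarrow> ('v \<Rightarrow> 'k \<times> 'k) \<times> ('v \<Rightarrow> 'k)" where
  "to_blocks x = (\<lambda>y. if y \<in> I then (coord x (bd C y), coord x y) else (0, 0),
     \<lambda>j. if j \<in> J then coord x j else 0)"

lemma I_car: "I \<subseteq> car C"
  using I_subset_base base_car by blast

lemma hdeg_base_eq: "b \<in> base \<Longrightarrow> b \<in> deg C m \<Longrightarrow> hdeg b = m"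
  using hdeg_eq base_nonzero by blast

lemma filt_real: "b \<in> base \<Longrightarrow> ereal (real_of_ereal (filt C b)) = filt C b"
  using base_filt[of b] filt_not_inf[of b] base_car by (cases "filt C b") auto

lemma fin_lo_le_fin_hi: "i \<in> I \<Longrightarrow> fin_lo i \<le> fin_hi i"
  using filt_real bd_I_subset_base I_subset_base filt_bd_le I_car
  unfolding fin_lo_def fin_hi_def by (metis image_eqI ereal_less_eq(3) subsetD)

lemma hdeg_I: "y \<in> I \<Longrightarrow> hdeg y = fin_deg y + 1"
proof -
  assume y: "y \<in> I"
  then have "y \<in> deg C (hdeg y - 1 + 1)"
    using base_hdeg I_subset_base by auto
  then have "bd C y \<in> deg C (hdeg y - 1)"
    by (rule bd_deg)
  then have "hdeg (bd C y) = hdeg y - 1"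
    using hdeg_base_eq bd_I_subset_base y by blast
  then show ?thesis
    unfolding fin_deg_def by simp
qed

lemma finite_bd_preimage:
  assumes "finite S"
  shows "finite {y\<in>I. bd C y \<in> S}"
proof -
  have "inj_on (bd C) {y\<in>I. bd C y \<in> S}"
    using inj_on_bd by (rule inj_on_subset) auto
  moreover have "bd C ` {y\<in>I. bd C y \<in> S} \<subseteq> S"
    by auto
  ultimately show ?thesis
    using assms by (meson finite_imageD finite_subset)
qed

lemma mem_deg_Efin: "p \<in> deg (Efin k a b) n \<longleftrightarrow> (fst p \<noteq> 0 \<longrightarrow> n = k) \<and> (snd p \<noteq> 0 \<longrightarrow> n = k + 1)"
  by (cases p) (auto simp: Efin_simps)

lemma mem_deg_Einf: "x \<in> deg (Einf l c) n \<longleftrightarrow> (x \<noteq> 0 \<longrightarrow> n = l)"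
  by (auto simp: Einf_simps)

lemma blocks_car: "d \<in> car blocks \<longleftrightarrow>
    (\<forall>i. i \<notin> I \<longrightarrow> fst d i = (0, 0)) \<and> finite {i. fst d i \<noteq> (0, 0)} \<and>
    (\<forall>j. j \<notin> J \<longrightarrow> snd d j = 0) \<and> finite {j. snd d j \<noteq> 0}"
  unfolding blocks_def fin_part_def inf_part_def
  by (cases d) (simp add: dsum2_simps dsumF_simps Efin_simps Einf_simps)

lemma blocks_deg: "d \<in> deg blocks n \<longleftrightarrow> d \<in> car blocks \<and>
    (\<forall>i\<in>I. (fst (fst d i) \<noteq> 0 \<longrightarrow> n = fin_deg i) \<and> (snd (fst d i) \<noteq> 0 \<longrightarrow> n = fin_deg i + 1)) \<and>
    (\<forall>j\<in>J. snd d j \<noteq> 0 \<longrightarrow> n = inf_deg j)"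
  unfolding blocks_car unfolding blocks_def fin_part_def inf_part_def
  by (cases d) (auto simp: dsum2_simps dsumF_simps mem_deg_Einf mem_deg_Efin Efin_simps(3) Einf_simps(3))

subsection \<open>The isomorphism with the elementary blocks\<close>

lemma to_blocks_support:
  assumes x: "x \<in> car C"
  shows "finite {i. fst (to_blocks x) i \<noteq> (0, 0)}" "finite {j. snd (to_blocks x) j \<noteq> 0}"
proof -
  have fin: "finite {b. coord x b \<noteq> 0}"
    using coord_finite[OF x] .
  have "{i. fst (to_blocks x) i \<noteq> (0, 0)} \<subseteq> {y\<in>I. bd C y \<in> {b. coord x b \<noteq> 0}} \<union> {b. coord x b \<noteq> 0}"
    unfolding to_blocks_def by auto
  then show "finite {i. fst (to_blocks x) i \<noteq> (0, 0)}"
    using fin finite_bd_preimage[OF fin] by (meson finite_UnI finite_subset)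
  have "{j. snd (to_blocks x) j \<noteq> 0} \<subseteq> {b. coord x b \<noteq> 0}"
    unfolding to_blocks_def by auto
  then show "finite {j. snd (to_blocks x) j \<noteq> 0}"
    using fin by (rule finite_subset)
qed

lemma to_blocks_car: "x \<in> car C \<Longrightarrow> to_blocks x \<in> car blocks"
  using to_blocks_support unfolding blocks_car by (simp add: to_blocks_def)

lemma to_blocks_add:
  "x \<in> car C \<Longrightarrow> y \<in> car C \<Longrightarrow> to_blocks (add C x y) = add blocks (to_blocks x) (to_blocks y)"
  unfolding blocks_def fin_part_def inf_part_def to_blocks_def
  by (auto simp: dsum2_simps dsumF_simps Efin_simps Einf_simps coord_add fun_eq_iff)

lemma to_blocks_smul: "x \<in> car C \<Longrightarrow> to_blocks (smul C c x) = smul blocks c (to_blocks x)"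
  unfolding blocks_def fin_part_def inf_part_def to_blocks_def
  by (auto simp: dsum2_simps dsumF_simps Efin_simps Einf_simps coord_smul fun_eq_iff)

lemma to_blocks_bd:
  assumes x: "x \<in> car C"
  shows "to_blocks (bd C x) = bd blocks (to_blocks x)"
proof -
  have "coord (bd C x) y = 0" if "y \<in> I \<union> J" for y
    using coord_bd_zero[OF x] that I_disjoint_bd_I bd_I_disjoint_J by blast
  then show ?thesis
    unfolding blocks_def fin_part_def inf_part_def to_blocks_def using coord_bd_bd[OF x]
    by (auto simp: dsum2_simps dsumF_simps Efin_simps Einf_simps fun_eq_iff)
qed

lemma to_blocks_deg:
  assumes x: "x \<in> deg C n"
  shows "to_blocks x \<in> deg blocks n"
proof -
  have hd: "hdeg b = n" if "coord x b \<noteq> 0" "b \<in> base" for b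
    using coord_deg[OF x] hdeg_base_eq that by blast
  have "n = fin_deg i" if "i \<in> I" "coord x (bd C i) \<noteq> 0" for i
    using hd[of "bd C i"] that bd_I_subset_base unfolding fin_deg_def by auto
  moreover have "n = fin_deg i + 1" if "i \<in> I" "coord x i \<noteq> 0" for i
    using hd[of i] that I_subset_base hdeg_I by auto
  moreover have "n = inf_deg j" if "j \<in> J" "coord x j \<noteq> 0" for j
    using hd[of j] that J_subset_base unfolding inf_deg_def by auto
  ultimately show ?thesis
    unfolding blocks_deg using to_blocks_car[OF deg_car[OF x]] by (simp add: to_blocks_def)
qed

lemma filt_Efin_block:
  assumes i: "i \<in> I"
  shows "filt (Efin (fin_deg i) (fin_lo i) (fin_hi i)) (coord x (bd C i), coord x i) =
    Sup (filt C ` ({bd C i, i} \<inter> {b. coord x b \<noteq> 0}))"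
proof -
  have "ereal (fin_lo i) = filt C (bd C i)" "ereal (fin_hi i) = filt C i"
    unfolding fin_lo_def fin_hi_def using filt_real bd_I_subset_base I_subset_base i by blast+
  moreover have "filt C (bd C i) \<le> filt C i"
    using filt_bd_le I_car i by blast
  ultimately show ?thesis
    by (cases "coord x i = 0"; cases "coord x (bd C i) = 0") (auto simp: Efin_simps bot_ereal_def max_def)
qed

lemma filt_Einf_block:
  assumes j: "j \<in> J"
  shows "filt (Einf (inf_deg j) (inf_lev j)) (coord x j) = Sup (filt C ` ({j} \<inter> {b. coord x b \<noteq> 0}))"
proof -
  have "ereal (inf_lev j) = filt C j"
    unfolding inf_lev_def using filt_real J_subset_base j by blast
  then show ?thesis
    by (auto simp: Einf_simps bot_ereal_def)
qed

lemma filt_to_blocks: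
  assumes x: "x \<in> car C"
  shows "filt blocks (to_blocks x) = filt C x"
proof -
  define S where "S = {b. coord x b \<noteq> 0}"
  have "filt blocks (to_blocks x) = max
      (SUP i\<in>I. filt (Efin (fin_deg i) (fin_lo i) (fin_hi i)) (coord x (bd C i), coord x i))
      (SUP j\<in>J. filt (Einf (inf_deg j) (inf_lev j)) (coord x j))"
    unfolding blocks_def fin_part_def inf_part_def to_blocks_def
    by (simp add: dsum2_simps dsumF_simps setcompr_eq_image)
  also have "\<dots> = max (SUP i\<in>I. Sup (filt C ` ({bd C i, i} \<inter> S))) (SUP j\<in>J. Sup (filt C ` ({j} \<inter> S)))"
    unfolding S_def using filt_Efin_block filt_Einf_block by simp
  also have "\<dots> = Sup (filt C ` ((\<Union>i\<in>I. {bd C i, i} \<inter> S) \<union> (\<Union>j\<in>J. {j} \<inter> S)))"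
    by (simp only: image_Un Sup_union_distrib sup_max SUP_UNION)
  also have "(\<Union>i\<in>I. {bd C i, i} \<inter> S) \<union> (\<Union>j\<in>J. {j} \<inter> S) = S"
    using coord_base[OF x] unfolding S_def base_def by blast
  finally show ?thesis
    using filt_coord[OF x] unfolding S_def by simp
qed

lemma acc_mor_to_blocks: "acc_mor C blocks to_blocks"
  unfolding acc_mor_def using to_blocks_car to_blocks_add to_blocks_smul to_blocks_deg to_blocks_bd
    filt_to_blocks deg_car by auto

definition block_coords :: "('v \<Rightarrow> 'k \<times> 'k) \<times> ('v \<Rightarrow> 'k) \<Rightarrow> 'v \<Rightarrow> 'k" where
  "block_coords d b = (if b \<in> I then snd (fst d b) else if b \<in> J then snd d b
      else if b \<in> bd C ` I then fst (fst d (inv_into I (bd C) b)) else 0)"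

definition from_blocks :: "('v \<Rightarrow> 'k \<times> 'k) \<times> ('v \<Rightarrow> 'k) \<Rightarrow> 'v" where
  "from_blocks d = lincomb {b. block_coords d b \<noteq> 0} (block_coords d)"

lemma block_coords_support:
  assumes d: "d \<in> car blocks"
  shows "finite {b. block_coords d b \<noteq> 0}" "{b. block_coords d b \<noteq> 0} \<subseteq> base"
proof -
  have "{b. block_coords d b \<noteq> 0} \<subseteq>
      {i. fst d i \<noteq> (0, 0)} \<union> {j. snd d j \<noteq> 0} \<union> bd C ` {i. fst d i \<noteq> (0, 0)}"
  proof
    fix b assume b: "b \<in> {b. block_coords d b \<noteq> 0}"
    show "b \<in> {i. fst d i \<noteq> (0, 0)} \<union> {j. snd d j \<noteq> 0} \<union> bd C ` {i. fst d i \<noteq> (0, 0)}"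
    proof (cases "b \<in> I \<union> J")
      case False
      then have "b \<in> bd C ` I" "fst d (inv_into I (bd C) b) \<noteq> (0, 0)"
        using b unfolding block_coords_def by (auto split: if_splits)
      then show ?thesis
        by (metis (mono_tags, lifting) UnI2 f_inv_into_f image_eqI mem_Collect_eq)
    qed (use b in \<open>auto simp: block_coords_def split: if_splits\<close>)
  qed
  moreover have "finite ({i. fst d i \<noteq> (0, 0)} \<union> {j. snd d j \<noteq> 0} \<union> bd C ` {i. fst d i \<noteq> (0, 0)})"
    using d unfolding blocks_car by auto
  ultimately show "finite {b. block_coords d b \<noteq> 0}"
    by (rule finite_subset)
  show "{b. block_coords d b \<noteq> 0} \<subseteq> base"
    unfolding block_coords_def base_def by (auto split: if_splits)
qed

lemma from_blocks_car: "d \<in> car blocks \<Longrightarrow> from_blocks d \<in> car C"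
  unfolding from_blocks_def using block_coords_support base_car by (meson lincomb_closed order_trans)

lemma coord_from_blocks: "d \<in> car blocks \<Longrightarrow> coord (from_blocks d) = block_coords d"
  unfolding from_blocks_def using coord_lincomb[OF block_coords_support] by (auto simp: fun_eq_iff)

lemma to_from_blocks:
  assumes d: "d \<in> car blocks"
  shows "to_blocks (from_blocks d) = d"
proof -
  have "bd C y \<notin> I" "bd C y \<notin> J" if "y \<in> I" for y
    using that I_disjoint_bd_I bd_I_disjoint_J by auto
  then have "fst (to_blocks (from_blocks d)) y = fst d y" "snd (to_blocks (from_blocks d)) j = snd d j"
    for y j
    using d I_disjoint_J unfolding blocks_car
    by (auto simp: to_blocks_def coord_from_blocks[OF d] block_coords_def inv_bd prod_eq_iff)
  then show ?thesis
    by (simp add: prod_eq_iff fun_eq_iff)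
qed

lemma from_to_blocks:
  assumes x: "x \<in> car C"
  shows "from_blocks (to_blocks x) = x"
proof -
  have "block_coords (to_blocks x) = coord x"
  proof
    fix b show "block_coords (to_blocks x) b = coord x b"
  proof (cases "b \<in> base")
    case False
    then show ?thesis
      using coord_base[OF x] unfolding block_coords_def base_def by auto
  qed (auto simp: base_def block_coords_def to_blocks_def inv_bd)
  qed
  then show ?thesis
    unfolding from_blocks_def using lincomb_coord[OF x] by simp
qed

lemma from_blocks_deg:
  assumes d: "d \<in> deg blocks n"
  shows "from_blocks d \<in> deg C n"
proof -
  note dd = d[unfolded blocks_deg]
  have hd: "hdeg b = n" if b: "block_coords d b \<noteq> 0" for b
  proof -
    consider "b \<in> I" | "b \<notin> I" "b \<in> J" | "b \<notin> I" "b \<notin> J" "b \<in> bd C ` I"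
      using b unfolding block_coords_def by (auto split: if_splits)
    then show ?thesis
    proof cases
      case 1
      then show ?thesis
        using b dd hdeg_I unfolding block_coords_def by auto
    next
      case 2
      then show ?thesis
        using b dd unfolding block_coords_def inf_deg_def by auto
    next
      case 3
      define y where "y = inv_into I (bd C) b"
      have y: "y \<in> I" "b = bd C y"
        using 3(3) unfolding y_def by (auto simp: inv_into_into f_inv_into_f)
      then show ?thesis
        using b 3 dd unfolding block_coords_def fin_deg_def y_def[symmetric] by auto
    qed
  qed
  have "{b. block_coords d b \<noteq> 0} \<subseteq> base"
    using dd by (intro block_coords_support(2)) blast
  then have "{b. block_coords d b \<noteq> 0} \<subseteq> deg C n"
    using hd base_hdeg by auto
  then show ?thesis
    unfolding from_blocks_def by (rule subspace_lincomb[OF deg_subspace])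
qed

lemma acc_iso_blocks: "acc_iso C blocks"
proof (rule acc_isoI[OF acc_mor_to_blocks])
  show "\<forall>x\<in>car blocks. to_blocks (from_blocks x) = x"
    using to_from_blocks by blast
  show "\<forall>x\<in>car C. filt blocks (to_blocks x) = filt C x"
    using filt_to_blocks by blast
  show "\<forall>n. from_blocks ` deg blocks n \<subseteq> deg C n"
    using from_blocks_deg by blast
qed (use from_blocks_car from_to_blocks in auto)

end

subsection \<open>Homology\<close>

context wo_asc_complex
begin

lemma cycles_car: "x \<in> cycles C \<Longrightarrow> x \<in> car C"
  unfolding cycles_def by auto

lemma subspace_cycles: "is_subspace (cycles C)"
  unfolding is_subspace_def cycles_def by (auto simp: bd_add bd_smul)

lemma subspace_bounds: "is_subspace (bounds C)"
proof (rule is_subspaceI)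
  show "bounds C \<subseteq> car C"
    unfolding bounds_def by auto
  show "zer C \<in> bounds C"
    unfolding bounds_def by (rule image_eqI[of _ _ "zer C"]) auto
  show "add C x y \<in> bounds C" if xy: "x \<in> bounds C" "y \<in> bounds C" for x y
  proof -
    obtain a where "a \<in> car C" "x = bd C a"
      using xy(1) unfolding bounds_def by auto
    moreover obtain b where "b \<in> car C" "y = bd C b"
      using xy(2) unfolding bounds_def by auto
    ultimately show ?thesis
      unfolding bounds_def using bd_add by (intro image_eqI[of _ _ "add C a b"]) auto
  qed
  show "smul C c x \<in> bounds C" if x: "x \<in> bounds C" for c x
  proof -
    obtain a where "a \<in> car C" "x = bd C a"
      using x unfolding bounds_def by auto
    then show ?thesis
      unfolding bounds_def using bd_smul by (intro image_eqI[of _ _ "smul C c a"]) auto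
  qed
qed

lemma mem_hclass: "x \<in> hclass C y \<longleftrightarrow> (\<exists>b\<in>bounds C. x = add C y b)"
  unfolding hclass_def by auto

lemma hclass_eqI:
  assumes x: "x \<in> car C" and y: "y \<in> car C" and d: "add C x (neg y) \<in> bounds C"
  shows "hclass C x = hclass C y"
proof -
  note B = is_subspaceD[OF subspace_bounds]
  define b0 where "b0 = add C x (neg y)"
  have b0: "b0 \<in> bounds C" "b0 \<in> car C"
    using d B unfolding b0_def by auto
  have xy: "x = add C y b0"
    unfolding b0_def using x y by (metis add_assoc add_comm add_neg add_zer neg_closed)
  show ?thesis
  proof
    show "hclass C x \<subseteq> hclass C y"
    proof
      fix z assume "z \<in> hclass C x"
      then obtain b where b: "b \<in> bounds C" "z = add C x b"
        unfolding mem_hclass by auto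
      have "z = add C y (add C b0 b)"
        using b xy b0 y B by (simp add: add_assoc)
      then show "z \<in> hclass C y"
        unfolding mem_hclass using b b0 B by blast
    qed
    show "hclass C y \<subseteq> hclass C x"
    proof
      fix z assume "z \<in> hclass C y"
      then obtain b where b: "b \<in> bounds C" "z = add C y b"
        unfolding mem_hclass by auto
      have "y = add C x (neg b0)"
        using xy y b0 by (metis add_neg_cancel_right)
      then have "z = add C x (add C (neg b0) b)"
        using b b0 x B by (simp add: add_assoc)
      then show "z \<in> hclass C x"
        unfolding mem_hclass using b b0 B by blast
    qed
  qed
qed

lemma hclass_eqD:
  assumes x: "x \<in> car C" and y: "y \<in> car C" and e: "hclass C x = hclass C y"
  shows "add C x (neg y) \<in> bounds C"
proof -
  note B = is_subspaceD[OF subspace_bounds]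
  have "x \<in> hclass C x"
    unfolding mem_hclass using x B by (intro bexI[of _ "zer C"]) auto
  then obtain b where b: "b \<in> bounds C" "x = add C y b"
    unfolding e mem_hclass by auto
  then have "add C x (neg y) = b"
    using y B by (metis add_assoc add_comm add_neg add_zer neg_closed subsetD)
  then show ?thesis
    using b by simp
qed

lemma hclass_zer: "hclass C (zer C) = bounds C"
proof
  note B = is_subspaceD[OF subspace_bounds]
  show "hclass C (zer C) \<subseteq> bounds C"
    unfolding hclass_def using B by auto
  show "bounds C \<subseteq> hclass C (zer C)"
  proof
    fix x assume x: "x \<in> bounds C"
    then have "x = add C (zer C) x"
      using B by simp
    then show "x \<in> hclass C (zer C)"
      unfolding mem_hclass using x by blast
  qed
qed

lemma homology_simps:
  "car (homology C) = hclass C ` cycles C"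
  "add (homology C) = (\<lambda>X Y. {add C x y | x y. x \<in> X \<and> y \<in> Y})"
  "zer (homology C) = bounds C"
  "smul (homology C) = (\<lambda>c X. {add C (smul C c x) b | x b. x \<in> X \<and> b \<in> bounds C})"
  "deg (homology C) = (\<lambda>n. hclass C ` (cycles C \<inter> deg C n))"
  "bd (homology C) = (\<lambda>_. bounds C)"
  "filt (homology C) = spec_inv C"
  unfolding homology_def by simp_all

lemma hclass_add:
  assumes x: "x \<in> car C" and y: "y \<in> car C"
  shows "add (homology C) (hclass C x) (hclass C y) = hclass C (add C x y)"
  unfolding homology_simps
proof
  note B = is_subspaceD[OF subspace_bounds]
  show "{add C x' y' |x' y'. x' \<in> hclass C x \<and> y' \<in> hclass C y} \<subseteq> hclass C (add C x y)"
  proof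
    fix z assume "z \<in> {add C x' y' |x' y'. x' \<in> hclass C x \<and> y' \<in> hclass C y}"
    then obtain b1 b2 where b: "b1 \<in> bounds C" "b2 \<in> bounds C" "z = add C (add C x b1) (add C y b2)"
      unfolding mem_hclass by blast
    then have "z = add C (add C x y) (add C b1 b2)"
      using add_add_swap x y B by auto
    then show "z \<in> hclass C (add C x y)"
      unfolding mem_hclass using b B by blast
  qed
  show "hclass C (add C x y) \<subseteq> {add C x' y' |x' y'. x' \<in> hclass C x \<and> y' \<in> hclass C y}"
  proof
    fix z assume "z \<in> hclass C (add C x y)"
    then obtain b where b: "b \<in> bounds C" "z = add C (add C x y) b"
      unfolding mem_hclass by blast
    have "z = add C (add C x b) (add C y (zer C))"
      using b x y B add_add_swap[of x y b "zer C"] by auto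
    moreover have "add C x b \<in> hclass C x" "add C y (zer C) \<in> hclass C y"
      unfolding mem_hclass using b B by auto
    ultimately show "z \<in> {add C x' y' |x' y'. x' \<in> hclass C x \<and> y' \<in> hclass C y}"
      by blast
  qed
qed

lemma hclass_smul:
  assumes x: "x \<in> car C"
  shows "smul (homology C) c (hclass C x) = hclass C (smul C c x)"
  unfolding homology_simps
proof
  note B = is_subspaceD[OF subspace_bounds]
  show "{add C (smul C c x') b |x' b. x' \<in> hclass C x \<and> b \<in> bounds C} \<subseteq> hclass C (smul C c x)"
  proof
    fix z assume "z \<in> {add C (smul C c x') b |x' b. x' \<in> hclass C x \<and> b \<in> bounds C}"
    then obtain b1 b where b: "b1 \<in> bounds C" "b \<in> bounds C" "z = add C (smul C c (add C x b1)) b"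
      unfolding mem_hclass by blast
    then have "z = add C (smul C c x) (add C (smul C c b1) b)"
      using x B by (simp add: smul_add add_assoc)
    then show "z \<in> hclass C (smul C c x)"
      unfolding mem_hclass using b B by blast
  qed
  show "hclass C (smul C c x) \<subseteq> {add C (smul C c x') b |x' b. x' \<in> hclass C x \<and> b \<in> bounds C}"
  proof
    fix z assume "z \<in> hclass C (smul C c x)"
    then obtain b where b: "b \<in> bounds C" "z = add C (smul C c x) b"
      unfolding mem_hclass by blast
    have "z = add C (smul C c (add C x (zer C))) b"
      using b x by simp
    moreover have "add C x (zer C) \<in> hclass C x"
      unfolding mem_hclass using B by auto
    ultimately show "z \<in> {add C (smul C c x') b |x' b. x' \<in> hclass C x \<and> b \<in> bounds C}"
      using b by blast
  qed
qed

lemma homology_add_closed: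
  "X \<in> car (homology C) \<Longrightarrow> Y \<in> car (homology C) \<Longrightarrow> add (homology C) X Y \<in> car (homology C)"
  using hclass_add cycles_car is_subspaceD(3)[OF subspace_cycles] unfolding homology_simps(1) by auto

lemma homology_smul_closed: "X \<in> car (homology C) \<Longrightarrow> smul (homology C) c X \<in> car (homology C)"
  using hclass_smul cycles_car is_subspaceD(4)[OF subspace_cycles] unfolding homology_simps(1) by auto

lemma homology_bd_closed: "bd (homology C) X \<in> car (homology C)"
  using hclass_zer is_subspaceD(2)[OF subspace_cycles] unfolding homology_simps by (metis image_eqI)

end

context svd_basis
begin

lemma coord_bounds_J: "b \<in> bounds C \<Longrightarrow> j \<in> J \<Longrightarrow> coord b j = 0"
  unfolding bounds_def using coord_bd_zero bd_I_disjoint_J by blast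

lemma coord_cycles_I: "x \<in> cycles C \<Longrightarrow> y \<in> I \<Longrightarrow> coord x y = 0"
  unfolding cycles_def using coord_bd_bd[of x y] coord_zer by auto

lemma lincomb_J_cycles: "finite T \<Longrightarrow> T \<subseteq> J \<Longrightarrow> lincomb T c \<in> cycles C"
  unfolding cycles_def using J_subset_base base_car by (auto intro!: bd_lincomb_cycles)

lemma lincomb_bd_I_bounds:
  assumes T: "finite T" "T \<subseteq> bd C ` I"
  shows "lincomb T c \<in> bounds C"
proof -
  define g where "g = inv_into I (bd C)"
  define T' where "T' = g ` T"
  have T'I: "T' \<subseteq> I"
    unfolding T'_def g_def using T(2) by (auto intro: inv_into_into)
  have bg: "bd C (g w) = w" if "w \<in> T" for w
    unfolding g_def using that T(2) by (auto intro: f_inv_into_f)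
  have gb: "g (bd C v) = v" if "v \<in> I" for v
    unfolding g_def using inj_on_bd that by (rule inv_into_f_f)
  have T': "finite T'" "T' \<subseteq> car C"
    using T(1) T'I I_car unfolding T'_def by auto
  have "bd C (lincomb T' (\<lambda>y. c (bd C y))) = lincomb (bd C ` T') (\<lambda>w. c (bd C (g w)))"
    using T' T'I gb by (intro bd_lincomb_image) auto
  also have "bd C ` T' = T"
    unfolding T'_def using bg by force
  also have "lincomb T (\<lambda>w. c (bd C (g w))) = lincomb T c"
    using T bg bd_I_subset_base base_car by (intro lincomb_cong) auto
  finally show ?thesis
    unfolding bounds_def using T' by (metis image_eqI lincomb_closed)
qed

text \<open>The part of a chain along the homology generators \<open>J\<close>; for a cycle, the rest lies in the span
  of \<open>\<partial>I\<close> and is therefore a boundary.\<close>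

definition J_part :: "'v \<Rightarrow> 'v" where
  "J_part x = lincomb {j\<in>J. coord x j \<noteq> 0} (coord x)"

lemma J_part_support:
  "x \<in> car C \<Longrightarrow> finite {j\<in>J. coord x j \<noteq> 0} \<and> {j\<in>J. coord x j \<noteq> 0} \<subseteq> base"
  using coord_finite J_subset_base by auto

lemma J_part_cycles: "x \<in> car C \<Longrightarrow> J_part x \<in> cycles C"
  unfolding J_part_def using J_part_support by (intro lincomb_J_cycles) auto

lemma filt_J_part: "x \<in> car C \<Longrightarrow> filt C (J_part x) = Sup (filt C ` {j\<in>J. coord x j \<noteq> 0})"
  unfolding J_part_def using orthogonalD[OF orthogonal_base] J_part_support by simp

lemma hclass_J_part:
  assumes x: "x \<in> cycles C"
  shows "hclass C (J_part x) = hclass C x"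
proof -
  have xC: "x \<in> car C"
    using x by (rule cycles_car)
  define S where "S = {b. coord x b \<noteq> 0}"
  define T where "T = S \<inter> bd C ` I"
  have S: "finite S" "S \<subseteq> car C" "S \<inter> I = {}"
    using xC coord_finite coord_base base_car coord_cycles_I[OF x] unfolding S_def by auto
  have "S = {j\<in>J. coord x j \<noteq> 0} \<union> T" "{j\<in>J. coord x j \<noteq> 0} \<inter> T = {}"
    using S coord_base[OF xC] bd_I_disjoint_J unfolding T_def S_def base_def by auto
  then have "x = add C (J_part x) (lincomb T (coord x))"
    using lincomb_coord[OF xC] S lincomb_Un_disjoint[of "{j\<in>J. coord x j \<noteq> 0}" T "coord x"]
    unfolding J_part_def S_def by (metis finite_Un le_sup_iff)
  then have "add C x (neg (J_part x)) = lincomb T (coord x)"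
    using J_part_cycles[OF xC] S cycles_car unfolding T_def
    by (metis add_comm eq_add_neg_if_add_eq inf.coboundedI1 lincomb_closed)
  moreover have "lincomb T (coord x) \<in> bounds C"
    using S unfolding T_def by (intro lincomb_bd_I_bounds) auto
  ultimately show ?thesis
    using hclass_eqI[OF xC cycles_car[OF J_part_cycles[OF xC]]] by simp
qed

lemma coord_J_eq_if_hclass_eq:
  assumes x: "x \<in> car C" and y: "y \<in> car C" and e: "hclass C x = hclass C y" and j: "j \<in> J"
  shows "coord x j = coord y j"
proof -
  have "coord (add C x (neg y)) j = 0"
    using coord_bounds_J[OF hclass_eqD[OF x y e] j] .
  then show ?thesis
    using x y by (simp add: coord_add coord_neg)
qed

lemma spec_inv_hclass:
  assumes x: "x \<in> cycles C"
  shows "spec_inv C (hclass C x) = Sup (filt C ` {j\<in>J. coord x j \<noteq> 0})"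
  unfolding spec_inv_def
proof (rule antisym)
  show "Inf {filt C c | c. c \<in> cycles C \<and> hclass C c = hclass C x} \<le> Sup (filt C ` {j\<in>J. coord x j \<noteq> 0})"
  proof (rule Inf_lower2)
    show "filt C (J_part x) \<in> {filt C c | c. c \<in> cycles C \<and> hclass C c = hclass C x}"
      using J_part_cycles hclass_J_part x cycles_car by blast
    show "filt C (J_part x) \<le> Sup (filt C ` {j\<in>J. coord x j \<noteq> 0})"
      using filt_J_part x cycles_car by simp
  qed
  show "Sup (filt C ` {j\<in>J. coord x j \<noteq> 0}) \<le> Inf {filt C c | c. c \<in> cycles C \<and> hclass C c = hclass C x}"
  proof (rule Inf_greatest)
    fix r assume "r \<in> {filt C c | c. c \<in> cycles C \<and> hclass C c = hclass C x}"
    then obtain c where c: "c \<in> cycles C" "hclass C c = hclass C x" "r = filt C c"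
      by blast
    have "{j\<in>J. coord x j \<noteq> 0} \<subseteq> {b. coord c b \<noteq> 0}"
      using coord_J_eq_if_hclass_eq[OF cycles_car[OF c(1)] cycles_car[OF x] c(2)] by auto
    then show "Sup (filt C ` {j\<in>J. coord x j \<noteq> 0}) \<le> r"
      using filt_coord[OF cycles_car[OF c(1)]] c(3) by (simp add: Sup_subset_mono image_mono)
  qed
qed

subsection \<open>The homology as the infinite-bar part\<close>

definition hom_coords :: "'v set \<Rightarrow> 'v \<Rightarrow> 'k" where
  "hom_coords X j = (if j \<in> J then coord (SOME x. x \<in> cycles C \<and> hclass C x = X) j else 0)"

definition hom_class_of :: "('v \<Rightarrow> 'k) \<Rightarrow> 'v set" where
  "hom_class_of q = hclass C (lincomb {j. q j \<noteq> 0} q)"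

lemma hom_coords_hclass:
  assumes x: "x \<in> cycles C"
  shows "hom_coords (hclass C x) = (\<lambda>j. if j \<in> J then coord x j else 0)"
proof -
  have "\<exists>y. y \<in> cycles C \<and> hclass C y = hclass C x"
    using x by blast
  then have "(SOME y. y \<in> cycles C \<and> hclass C y = hclass C x) \<in> cycles C \<and>
      hclass C (SOME y. y \<in> cycles C \<and> hclass C y = hclass C x) = hclass C x"
    by (rule someI_ex)
  then show ?thesis
    unfolding hom_coords_def using coord_J_eq_if_hclass_eq x cycles_car by (auto simp: fun_eq_iff)
qed

lemma inf_part_car: "q \<in> car inf_part \<longleftrightarrow> (\<forall>i. i \<notin> J \<longrightarrow> q i = 0) \<and> finite {j. q j \<noteq> 0}"
  unfolding inf_part_def by (simp add: dsumF_simps Einf_simps)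

lemma inf_part_deg: "q \<in> deg inf_part n \<longleftrightarrow> q \<in> car inf_part \<and> (\<forall>j\<in>J. q j \<noteq> 0 \<longrightarrow> n = inf_deg j)"
  unfolding inf_part_car unfolding inf_part_def by (auto simp: dsumF_simps mem_deg_Einf Einf_simps(3))

lemma hom_coords_car:
  assumes x: "x \<in> cycles C"
  shows "hom_coords (hclass C x) \<in> car inf_part"
proof -
  have "{j. (if j \<in> J then coord x j else 0) \<noteq> 0} \<subseteq> {b. coord x b \<noteq> 0}"
    by auto
  then show ?thesis
    unfolding inf_part_car hom_coords_hclass[OF x] using coord_finite[OF cycles_car[OF x]]
    by (auto intro: finite_subset)
qed

lemma filt_hom_coords:
  assumes x: "x \<in> cycles C"
  shows "filt inf_part (hom_coords (hclass C x)) = Sup (filt C ` {j\<in>J. coord x j \<noteq> 0})"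
proof -
  have "filt inf_part (hom_coords (hclass C x)) = (SUP j\<in>J. filt (Einf (inf_deg j) (inf_lev j)) (coord x j))"
    unfolding inf_part_def hom_coords_hclass[OF x] by (simp add: dsumF_simps setcompr_eq_image)
  also have "\<dots> = (SUP j\<in>J. Sup (filt C ` ({j} \<inter> {b. coord x b \<noteq> 0})))"
    using filt_Einf_block by simp
  also have "\<dots> = Sup (filt C ` (\<Union>j\<in>J. {j} \<inter> {b. coord x b \<noteq> 0}))"
    by (simp only: SUP_UNION)
  also have "(\<Union>j\<in>J. {j} \<inter> {b. coord x b \<noteq> 0}) = {j\<in>J. coord x j \<noteq> 0}"
    by auto
  finally show ?thesis .
qed

lemma lincomb_inf_part:
  assumes "q \<in> car inf_part"
  shows "lincomb {j. q j \<noteq> 0} q \<in> cycles C" "coord (lincomb {j. q j \<noteq> 0} q) = q"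
proof -
  have q: "finite {j. q j \<noteq> 0}" "{j. q j \<noteq> 0} \<subseteq> J"
    using assms unfolding inf_part_car by auto
  then show "lincomb {j. q j \<noteq> 0} q \<in> cycles C"
    by (rule lincomb_J_cycles)
  show "coord (lincomb {j. q j \<noteq> 0} q) = q"
    using coord_lincomb[OF q(1)] q(2) J_subset_base by (auto simp: fun_eq_iff)
qed

lemma acc_mor_hom_coords: "acc_mor (homology C) inf_part hom_coords"
  unfolding acc_mor_def
proof (intro conjI ballI allI subsetI)
  fix X Y assume "X \<in> car (homology C)" "Y \<in> car (homology C)"
  then obtain x y where x: "x \<in> cycles C" "X = hclass C x" and y: "y \<in> cycles C" "Y = hclass C y"
    unfolding homology_simps by auto
  then have "add C x y \<in> cycles C"
    using is_subspaceD(3)[OF subspace_cycles] by blast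
  then show "hom_coords (add (homology C) X Y) = add inf_part (hom_coords X) (hom_coords Y)"
    unfolding x y hclass_add[OF cycles_car[OF x(1)] cycles_car[OF y(1)]] hom_coords_hclass[OF x(1)]
      hom_coords_hclass[OF y(1)] hom_coords_hclass[OF \<open>add C x y \<in> cycles C\<close>]
    using x y cycles_car by (auto simp: inf_part_def dsumF_simps Einf_simps coord_add fun_eq_iff)
next
  fix c X assume "X \<in> car (homology C)"
  then obtain x where x: "x \<in> cycles C" "X = hclass C x"
    unfolding homology_simps by auto
  then have "smul C c x \<in> cycles C"
    using is_subspaceD(4)[OF subspace_cycles] by blast
  then show "hom_coords (smul (homology C) c X) = smul inf_part c (hom_coords X)"
    unfolding x hclass_smul[OF cycles_car[OF x(1)]] hom_coords_hclass[OF x(1)]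
      hom_coords_hclass[OF \<open>smul C c x \<in> cycles C\<close>]
    using x cycles_car by (auto simp: inf_part_def dsumF_simps Einf_simps coord_smul fun_eq_iff)
next
  fix n Z assume "Z \<in> hom_coords ` deg (homology C) n"
  then obtain x where x: "x \<in> cycles C" "x \<in> deg C n" "Z = hom_coords (hclass C x)"
    unfolding homology_simps by auto
  have "inf_deg j = n" if "j \<in> J" "coord x j \<noteq> 0" for j
    using coord_deg[OF x(2) that(2)] hdeg_base_eq J_subset_base that(1) unfolding inf_deg_def by blast
  then show "Z \<in> deg inf_part n"
    unfolding inf_part_deg x(3) using hom_coords_car[OF x(1)] by (auto simp: hom_coords_hclass[OF x(1)])
next
  fix X assume "X \<in> car (homology C)"
  then obtain x where x: "x \<in> cycles C" "X = hclass C x"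
    unfolding homology_simps by auto
  have "hom_coords (bd (homology C) X) = hom_coords (hclass C (zer C))"
    unfolding homology_simps hclass_zer ..
  also have "\<dots> = bd inf_part (hom_coords X)"
    using is_subspaceD(2)[OF subspace_cycles]
    by (simp add: hom_coords_hclass coord_zer inf_part_def dsumF_simps Einf_simps fun_eq_iff)
  finally show "hom_coords (bd (homology C) X) = bd inf_part (hom_coords X)" .
  show "filt inf_part (hom_coords X) \<le> filt (homology C) X"
    unfolding x homology_simps using filt_hom_coords[OF x(1)] spec_inv_hclass[OF x(1)] by simp
qed (auto simp: homology_simps hom_coords_car)

lemma hom_class_of_hom_coords: "X \<in> car (homology C) \<Longrightarrow> hom_class_of (hom_coords X) = X"
proof -
  assume "X \<in> car (homology C)"
  then obtain x where x: "x \<in> cycles C" "X = hclass C x"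
    unfolding homology_simps by auto
  have "{j. hom_coords X j \<noteq> 0} = {j\<in>J. coord x j \<noteq> 0}"
    unfolding x hom_coords_hclass[OF x(1)] by auto
  moreover have "lincomb {j\<in>J. coord x j \<noteq> 0} (hom_coords X) = J_part x"
    unfolding x hom_coords_hclass[OF x(1)] J_part_def using J_subset_base base_car by (intro lincomb_cong) auto
  ultimately show "hom_class_of (hom_coords X) = X"
    unfolding hom_class_of_def using hclass_J_part[OF x(1)] x(2) by simp
qed

lemma hom_coords_hom_class_of: "q \<in> car inf_part \<Longrightarrow> hom_coords (hom_class_of q) = q"
  unfolding hom_class_of_def using hom_coords_hclass lincomb_inf_part by (auto simp: inf_part_car fun_eq_iff)

lemma hom_class_of_deg:
  assumes q: "q \<in> deg inf_part n"
  shows "hom_class_of q \<in> deg (homology C) n"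
proof -
  have qC: "q \<in> car inf_part" and qd: "\<forall>j\<in>J. q j \<noteq> 0 \<longrightarrow> n = inf_deg j"
    using q unfolding inf_part_deg by blast+
  have "j \<in> deg C n" if "q j \<noteq> 0" for j
  proof -
    have "j \<in> J"
      using qC that unfolding inf_part_car by blast
    then show ?thesis
      using qd that base_hdeg J_subset_base unfolding inf_deg_def by blast
  qed
  then have "lincomb {j. q j \<noteq> 0} q \<in> deg C n"
    by (intro subspace_lincomb[OF deg_subspace]) blast
  moreover have "lincomb {j. q j \<noteq> 0} q \<in> cycles C"
    by (rule lincomb_inf_part(1)[OF qC])
  ultimately show ?thesis
    unfolding hom_class_of_def homology_simps by blast
qed

lemma acc_iso_inf_part_homology: "acc_iso inf_part (homology C)"
proof (rule acc_iso_sym, rule acc_isoI[OF acc_mor_hom_coords, where g = hom_class_of])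
  show "\<forall>x\<in>car inf_part. hom_class_of x \<in> car (homology C)"
    unfolding hom_class_of_def homology_simps using lincomb_inf_part(1) by blast
  show "\<forall>n. hom_class_of ` deg inf_part n \<subseteq> deg (homology C) n"
    using hom_class_of_deg by blast
  show "\<forall>X\<in>car (homology C). filt inf_part (hom_coords X) = filt (homology C) X"
    unfolding homology_simps using filt_hom_coords spec_inv_hclass by auto
qed (auto simp: homology_add_closed homology_smul_closed homology_bd_closed hom_class_of_hom_coords
    hom_coords_hom_class_of)

end

lemma (in wo_asc_complex) svd_basis: "svd_basis C svd_I svd_J"
  unfolding svd_basis_def svd_basis_axioms_def
  using wo_asc_complex_axioms orthogonal_basis_svd inj_on_bd_svd_I bd_svd_J bd_svd_I_disjoint_svd_J
    svd_basis_homogeneous by blast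

theorem corollary3p15:
  fixes C :: "('k::field, 'v) acc"
  assumes "asc_complex C"
    and "\<forall>n. well_ordered_set (filt C ` (deg C n - {zer C}))"
  shows "\<exists>(I :: 'v set) (k :: 'v \<Rightarrow> int) (a :: 'v \<Rightarrow> real) (b :: 'v \<Rightarrow> real)
            (J :: 'v set) (l :: 'v \<Rightarrow> int) (c :: 'v \<Rightarrow> real).
           (\<forall>i\<in>I. a i \<le> b i) \<and>
           acc_iso C (dsum2 (dsumF I (\<lambda>i. Efin (k i) (a i) (b i)))
                            (dsumF J (\<lambda>j. Einf (l j) (c j)))) \<and>
           acc_iso (dsumF J (\<lambda>j. Einf (l j) (c j))) (homology C)"
proof -
  have "vspace C"
    using assms(1) unfolding asc_complex_def chain_cx_def by blast
  then interpret wo_asc_complex C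
    using assms by unfold_locales
  interpret svd_basis C svd_I svd_J
    by (rule svd_basis)
  show ?thesis
    using fin_lo_le_fin_hi acc_iso_blocks acc_iso_inf_part_homology
    unfolding blocks_def fin_part_def inf_part_def by blast
qed

end
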